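(* Let $k\ge1$ be an integer, let $c_{(\theta_0,\ldots,\theta_{k+1})}$ be a multicusp, and let $0\le j\le k$. Denote by $(c_{\hat{\theta}_{k+1}})_{\hat{\theta}_j}$ the multigerm obtained from $c_{(\theta_0,\ldots,\theta_{k+1})}$ by removing both branches $c_{\theta_j}$ and $c_{\theta_{k+1}}$. If $[\tilde\xi]\in\ker\left({}_{k+1}\overline{\omega}\,(c_{\hat{\theta}_{k+1}})_{\hat{\theta}_j}\right)\subset m_0^{k+1}\theta_0(2)/m_0^{k+2}\theta_0(2)$, then $$[\tilde\xi]\in\ker\left({}_{k+1}\overline{\omega}\,c_{\hat{\theta}_j}\right)+\ker\left({}_{k+1}\overline{\omega}\,c_{\hat{\theta}_{k+1}}\right).$$
   Context: $\mathbb{K}=\mathbb{R}$ or $\mathbb{C}$; all germs are $C^\infty$ (if $\mathbb{K}=\mathbb{R}$) or holomorphic (if $\mathbb{K}=\mathbb{C}$). For a finite set $S\subset\mathbb{K}^n$, $C_S$ is the algebra of function germs $(\mathbb{K}^n,S)\to\mathbb{K}$, and $C_0$ that of germs $(\mathbb{K}^p,0)\to\mathbb{K}$; $m_0^\ell\subset C_0$ is the ideal of germs whose Taylor series vanish up to order $\ell-1$ ($m_0^0=C_0$). For a multigerm $f:(\mathbb{K}^n,S)\to(\mathbb{K}^p,0)$: $\theta_S(f)\cong C_S^{\,p}$ is the $C_S$-module of vector fields along $f$; $\theta_S(n)=\theta_S(\mathrm{id}_{(\mathbb{K}^n,S)})$, $\theta_0(p)=\theta_{\{0\}}(\mathrm{id}_{(\mathbb{K}^p,0)})\cong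 C_0^{\,p}$; $f^*u=u\circ f$; $f^*m_0^\ell\,\theta_S(f)$ denotes the $C_S$-submodule of $\theta_S(f)$ generated by $\{(u\circ f)\,v: u\in m_0^\ell, v\in\theta_S(f)\}$; $tf(\eta)=df\circ\eta$ for $\eta\in\theta_S(n)$, $\omega f(\xi)=\xi\circ f$ for $\xi\in\theta_0(p)$; $T\mathcal{R}_e(f)=tf(\theta_S(n))$. For $i\ge0$ the $\mathbb{K}$-linear map $${}_i\overline{\omega}f:\frac{m_0^i\theta_0(p)}{m_0^{i+1}\theta_0(p)}\to\frac{f^*m_0^i\theta_S(f)}{T\mathcal{R}_e(f)\cap f^*m_0^i\theta_S(f)+f^*m_0^{i+1}\theta_S(f)},\quad [\xi]\mapsto[\omega f(\xi)].$$ Multicusps: let $c(x)=(x^2,x^3)$ and $R_\theta$ the linear map of $\mathbb{K}^2$ with matrix $\begin{pmatrix}\cos\theta&-\sin\theta\\ \sin\theta&\cos\theta\end{pmatrix}$. Let $\theta_0,\ldots,\theta_i$ be real numbers with $0\le\theta_j<2\pi$ and $0\ne|\theta_j-\theta_k|\ne\pi$ for $j\ne k$. Let $S=\{s_0,\ldots,s_i\}\subset\mathbb{K}$ be distinct points and $c_{\theta_j}:(\mathbb{K},s_j)\to(\mathbb{K}^2,0)$, $c_{\theta_j}(x)=R_{\theta_j}(c(x-s_j))$. The multigerm $\{c_{\theta_0},\ldots,c_{\theta_i}\}:(\mathbb{K},S)\to(\mathbb{K}^2,0)$ is the multicusp $c_{(\theta_0,\ldots,\theta_i)}$. For $i\ge1$,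 $c_{\hat{\theta}_j}:(\mathbb{K},S\setminus\{s_j\})\to(\mathbb{K}^2,0)$ is the multigerm obtained by removing the branch $c_{\theta_j}$. *)

theory Defs
  imports "HOL-Analysis.Analysis"
begin

text \<open>The field K is the type variable 'a (a real normed field: real or complex).
  Differentiability is K-differentiability (field_differentiable), so over real
  this gives C-infinity germs and over complex holomorphic germs.\<close>

definition smooth1_on :: "'a::real_normed_field set \<Rightarrow> ('a \<Rightarrow> 'a) \<Rightarrow> bool" where
  "smooth1_on V g \<longleftrightarrow> open V \<and> (\<forall>n. \<forall>x\<in>V. ((deriv ^^ n) g) field_differentiable (at x))"

definition germ1_at :: "'a::real_normed_field \<Rightarrow> ('a \<Rightarrow> 'a) \<Rightarrow> bool" where
  "germ1_at p g \<longleftrightarrow> (\<exists>V. p \<in> V \<and> smooth1_on V g)"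

text \<open>A vector field along a map (K,p) \<rightarrow> K^2: a K^2-valued smooth germ.\<close>
definition vf1_at :: "'a::real_normed_field \<Rightarrow> ('a \<Rightarrow> 'a \<times> 'a) \<Rightarrow> bool" where
  "vf1_at p v \<longleftrightarrow> germ1_at p (\<lambda>x. fst (v x)) \<and> germ1_at p (\<lambda>x. snd (v x))"

definition partial1 :: "('a::real_normed_field \<times> 'a \<Rightarrow> 'a) \<Rightarrow> 'a \<times> 'a \<Rightarrow> 'a" where
  "partial1 h = (\<lambda>(x, y). deriv (\<lambda>t. h (t, y)) x)"

definition partial2 :: "('a::real_normed_field \<times> 'a \<Rightarrow> 'a) \<Rightarrow> 'a \<times> 'a \<Rightarrow> 'a" where
  "partial2 h = (\<lambda>(x, y). deriv (\<lambda>t. h (x, t)) y)"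

text \<open>All iterated partial derivatives exist and are continuous on the open set U.\<close>
definition smooth2_on :: "('a::real_normed_field \<times> 'a) set \<Rightarrow> ('a \<times> 'a \<Rightarrow> 'a) \<Rightarrow> bool" where
  "smooth2_on U g \<longleftrightarrow> open U \<and>
     (\<exists>F. g \<in> F \<and> (\<forall>h\<in>F. continuous_on U h \<and>
        (\<forall>x y. (x, y) \<in> U \<longrightarrow> (\<lambda>t. h (t, y)) field_differentiable (at x)
                               \<and> (\<lambda>t. h (x, t)) field_differentiable (at y)) \<and>
        partial1 h \<in> F \<and> partial2 h \<in> F))"

definition germ2_at0 :: "('a::real_normed_field \<times> 'a \<Rightarrow> 'a) \<Rightarrow> bool" where
  "germ2_at0 g \<longleftrightarrow> (\<exists>U. (0, 0) \<in> U \<and> smooth2_on U g)"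

text \<open>The ideal m_0^l of C_0: germs whose Taylor series at 0 vanish up to order l-1.\<close>
definition m0 :: "nat \<Rightarrow> ('a::real_normed_field \<times> 'a \<Rightarrow> 'a) \<Rightarrow> bool" where
  "m0 l g \<longleftrightarrow> germ2_at0 g \<and>
     (\<forall>a b. a + b < l \<longrightarrow> ((partial1 ^^ a) ((partial2 ^^ b) g)) (0, 0) = 0)"

text \<open>m_0^l theta_0(2): vector fields (K^2,0) \<rightarrow> K^2 with both components in m_0^l.\<close>
definition vf_m0 :: "nat \<Rightarrow> ('a::real_normed_field \<times> 'a \<Rightarrow> 'a \<times> 'a) \<Rightarrow> bool" where
  "vf_m0 l \<xi> \<longleftrightarrow> m0 l (\<lambda>p. fst (\<xi> p)) \<and> m0 l (\<lambda>p. snd (\<xi> p))"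

text \<open>A multigerm is given by an index set J, base points s j (j \<in> J) and
  branch maps F j (the germ at s j is the germ of F j).  Germs along the
  multigerm are represented by functions on K, compared near each s j.\<close>

definition psmul :: "'a::real_normed_field \<Rightarrow> 'a \<times> 'a \<Rightarrow> 'a \<times> 'a" where
  "psmul c p = (c * fst p, c * snd p)"

text \<open>a \<in> T R_e(f) = tf(theta_S(1)), tf(eta) = df o eta.\<close>
definition in_TRe :: "nat set \<Rightarrow> (nat \<Rightarrow> 'a::real_normed_field) \<Rightarrow> (nat \<Rightarrow> 'a \<Rightarrow> 'a \<times> 'a)
                      \<Rightarrow> ('a \<Rightarrow> 'a \<times> 'a) \<Rightarrow> bool" where
  "in_TRe J s F a \<longleftrightarrow> (\<exists>\<eta>. (\<forall>j\<in>J. germ1_at (s j) \<eta>) \<and>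
     (\<forall>j\<in>J. eventually (\<lambda>x. a x = psmul (\<eta> x)
              (deriv (\<lambda>t. fst (F j t)) x, deriv (\<lambda>t. snd (F j t)) x)) (nhds (s j))))"

text \<open>a \<in> f^* m_0^l theta_S(f): the C_S-submodule generated by (u o f) v, i.e.
  finite sums of such products.\<close>
definition in_pbm :: "nat set \<Rightarrow> (nat \<Rightarrow> 'a::real_normed_field) \<Rightarrow> (nat \<Rightarrow> 'a \<Rightarrow> 'a \<times> 'a)
                      \<Rightarrow> nat \<Rightarrow> ('a \<Rightarrow> 'a \<times> 'a) \<Rightarrow> bool" where
  "in_pbm J s F l a \<longleftrightarrow> (\<exists>(N::nat) u v. (\<forall>i<N. m0 l (u i) \<and> (\<forall>j\<in>J. vf1_at (s j) (v i))) \<and>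
     (\<forall>j\<in>J. eventually (\<lambda>x. a x = (\<Sum>i<N. psmul (u i (F j x)) (v i x))) (nhds (s j))))"

text \<open>[xi] \<in> ker(_i omega-bar f), for xi \<in> m_0^i theta_0(2):
  omega f(xi) = xi o f \<in> (T R_e(f) \<inter> f^* m_0^i theta_S(f)) + f^* m_0^(i+1) theta_S(f).\<close>
definition omega_ker :: "nat set \<Rightarrow> (nat \<Rightarrow> 'a::real_normed_field) \<Rightarrow> (nat \<Rightarrow> 'a \<Rightarrow> 'a \<times> 'a)
                      \<Rightarrow> nat \<Rightarrow> ('a \<times> 'a \<Rightarrow> 'a \<times> 'a) \<Rightarrow> bool" where
  "omega_ker J s F i \<xi> \<longleftrightarrow> (\<exists>a b. in_TRe J s F a \<and> in_pbm J s F i a \<and> in_pbm J s F (Suc i) b \<and>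
     (\<forall>j\<in>J. eventually (\<lambda>x. \<xi> (F j x) = a x + b x) (nhds (s j))))"

definition cusp :: "'a::real_normed_field \<Rightarrow> 'a \<times> 'a" where
  "cusp x = (x ^ 2, x ^ 3)"

definition rot :: "real \<Rightarrow> 'a::real_normed_field \<times> 'a \<Rightarrow> 'a \<times> 'a" where
  "rot th p = (of_real (cos th) * fst p - of_real (sin th) * snd p,
               of_real (sin th) * fst p + of_real (cos th) * snd p)"

definition cusp_branch :: "(nat \<Rightarrow> real) \<Rightarrow> (nat \<Rightarrow> 'a::real_normed_field) \<Rightarrow> nat \<Rightarrow> 'a \<Rightarrow> 'a \<times> 'a" where
  "cusp_branch th s j x = rot (th j) (cusp (x - s j))"

end

theory Submission
  imports Defs "HOL-Computational_Algebra.Polynomial"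
begin

text \<open>
  Write \<open>M = {0..k+1} - {j}\<close>.
  A vector field \<open>\<xi> \<in> m_0^{k+1}\<theta>_0(2)\<close> agrees modulo \<open>m_0^{k+2}\<close> with its homogeneous part
  \<open>P\<close> of degree \<open>k+1\<close>.  For a single cusp branch \<open>c_\<theta>\<close>, a homogeneous polynomial vector
  field of degree \<open>d\<close> lies in the kernel of the degree-\<open>d\<close> map \<open>\<omega>\<close> as soon as two linear
  conditions hold on the first two Taylor coefficients of its restriction to the line through
  the tangent direction \<open>(cos \<theta>, sin \<theta>)\<close>.  With \<open>\<ell>_n\<close> the linear form vanishing on the
  direction of branch \<open>n\<close>, the explicit field
    \<open>\<xi>_V = (2|M|+1) (\<Prod>\<ell>_n) V + 2 det(p,V) \<Sum>_m (\<Prod>_{n\<noteq>m} \<ell>_n) (cos \<theta>_m, sin \<theta>_m)\<close>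
  satisfies these conditions on every branch of \<open>M\<close>, while on branch \<open>j\<close> the two conditions
  are affine in \<open>V\<close> with invertible linear part (the angles are pairwise non-opposite).
  Choosing \<open>V\<close> so that \<open>\<xi>_V - P\<close> is in the kernel at branch \<open>j\<close> gives \<open>\<xi>\<^sub>1 = \<xi>_V\<close> and
  \<open>\<xi>\<^sub>2 = \<xi> - \<xi>\<^sub>1\<close>.  Kernel membership is local: for germs at distinct points it can be checked
  branch by branch, which reduces everything to single branches.
\<close>

lemma field_differentiable_eventually_eq:
  assumes "f field_differentiable at x" "eventually (\<lambda>y. f y = g y) (nhds x)"
  shows "g field_differentiable at x"
proof -
  obtain D where "(f has_field_derivative D) (at x)" using assms(1) field_differentiable_def by blast
  moreover have "(f has_field_derivative D) (at x) = (g has_field_derivative D) (at x)"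
    by (rule DERIV_cong_ev) (use assms(2) in auto)
  ultimately show ?thesis using field_differentiable_def by blast
qed

lemma germ1_transfer:
  assumes "germ1_at p f" "eventually (\<lambda>x. f x = g x) (nhds p)"
  shows "germ1_at p g"
proof -
  obtain V where V: "p \<in> V" "smooth1_on V f" using assms(1) germ1_at_def by blast
  obtain W where W: "open W" "p \<in> W" "\<forall>x\<in>W. f x = g x" using assms(2) eventually_nhds by blast
  have "smooth1_on (V \<inter> W) g"
    unfolding smooth1_on_def
  proof (intro conjI allI ballI)
    show "open (V \<inter> W)" using V W smooth1_on_def by auto
    fix n x assume x: "x \<in> V \<inter> W"
    have d: "(deriv ^^ n) f field_differentiable at x" using V x smooth1_on_def by blast
    have "eventually (\<lambda>y. (deriv ^^ n) f y = (deriv ^^ n) g y) (nhds x)"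
    proof (rule eventually_mono[OF eventually_nhds_in_open[OF W(1)]])
      fix y assume y: "y \<in> W"
      show "(deriv ^^ n) f y = (deriv ^^ n) g y"
        by (rule higher_deriv_cong_ev)
           (use eventually_nhds_in_open[OF W(1) y] W(3) in \<open>auto elim: eventually_mono\<close>)
    qed (use x in auto)
    then show "(deriv ^^ n) g field_differentiable at x"
      using d field_differentiable_eventually_eq by blast
  qed
  then show ?thesis unfolding germ1_at_def using V W by blast
qed

lemma higher_deriv_lincomb:
  assumes "open V"
    and df: "\<And>n x. x \<in> V \<Longrightarrow> (deriv ^^ n) f field_differentiable at x"
    and dg: "\<And>n x. x \<in> V \<Longrightarrow> (deriv ^^ n) g field_differentiable at x"
    and "x \<in> V"
  shows "(deriv ^^ n) (\<lambda>x. a * f x + b * g x) x = a * (deriv ^^ n) f x + b * (deriv ^^ n) g x"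
  using \<open>x \<in> V\<close>
proof (induction n arbitrary: x)
  case (Suc n)
  have ev: "eventually (\<lambda>y. (deriv ^^ n) (\<lambda>x. a * f x + b * g x) y
                            = a * (deriv ^^ n) f y + b * (deriv ^^ n) g y) (nhds x)"
    by (rule eventually_mono[OF eventually_nhds_in_open[OF \<open>open V\<close> Suc.prems]]) (use Suc.IH in blast)
  have "(deriv ^^ Suc n) (\<lambda>x. a * f x + b * g x) x
      = deriv (\<lambda>y. a * (deriv ^^ n) f y + b * (deriv ^^ n) g y) x"
    using deriv_cong_ev[OF ev refl] by simp
  also have "\<dots> = a * deriv ((deriv ^^ n) f) x + b * deriv ((deriv ^^ n) g) x"
    by (intro DERIV_imp_deriv DERIV_add DERIV_cmult field_differentiable_derivI df dg Suc.prems)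
  finally show ?case by simp
qed simp

lemma germ1_lin:
  assumes "germ1_at p f" "germ1_at p g"
  shows "germ1_at p (\<lambda>x. a * f x + b * g x)"
proof -
  obtain V1 where V1: "p \<in> V1" "smooth1_on V1 f" using assms(1) germ1_at_def by blast
  obtain V2 where V2: "p \<in> V2" "smooth1_on V2 g" using assms(2) germ1_at_def by blast
  define V where "V = V1 \<inter> V2"
  have oV: "open V" using V1 V2 smooth1_on_def V_def by auto
  have df: "\<And>n x. x \<in> V \<Longrightarrow> (deriv ^^ n) f field_differentiable at x"
    using V1 smooth1_on_def V_def by blast
  have dg: "\<And>n x. x \<in> V \<Longrightarrow> (deriv ^^ n) g field_differentiable at x"
    using V2 smooth1_on_def V_def by blast
  have "smooth1_on V (\<lambda>x. a * f x + b * g x)"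
    unfolding smooth1_on_def
  proof (intro conjI allI ballI oV)
    fix n x assume x: "x \<in> V"
    have ev: "eventually (\<lambda>y. a * (deriv ^^ n) f y + b * (deriv ^^ n) g y
                            = (deriv ^^ n) (\<lambda>x. a * f x + b * g x) y) (nhds x)"
      by (rule eventually_mono[OF eventually_nhds_in_open[OF oV x]])
         (simp add: higher_deriv_lincomb[OF oV df dg])
    have "(\<lambda>y. a * (deriv ^^ n) f y + b * (deriv ^^ n) g y) field_differentiable at x"
      by (intro field_differentiable_add field_differentiable_mult field_differentiable_const df dg x)
    then show "(deriv ^^ n) (\<lambda>x. a * f x + b * g x) field_differentiable at x"
      using ev field_differentiable_eventually_eq by blast
  qed
  then show ?thesis unfolding germ1_at_def using V1 V2 V_def by blast
qed

lemma deriv_poly_shift: "deriv (\<lambda>x. poly q (x - w)) = (\<lambda>x. poly (pderiv q) (x - w))"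
proof
  fix x
  have "((\<lambda>x. poly q (x - w)) has_field_derivative poly (pderiv q) (x - w) * 1) (at x)"
    by (rule DERIV_chain2[OF poly_DERIV]) (auto intro!: derivative_eq_intros)
  then show "deriv (\<lambda>x. poly q (x - w)) x = poly (pderiv q) (x - w)" using DERIV_imp_deriv by force
qed

lemma germ1_poly: "germ1_at z (\<lambda>x. poly q (x - w))"
proof -
  have e: "(deriv ^^ n) (\<lambda>x. poly q (x - w)) = (\<lambda>x. poly ((pderiv ^^ n) q) (x - w))" for n
    by (induction n) (simp_all add: deriv_poly_shift)
  have "smooth1_on UNIV (\<lambda>x. poly q (x - w))"
    unfolding smooth1_on_def e
  proof (intro conjI allI ballI open_UNIV)
    fix n x
    have "((\<lambda>x. poly ((pderiv ^^ n) q) (x - w)) has_field_derivative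
             poly (pderiv ((pderiv ^^ n) q)) (x - w) * 1) (at x)"
      by (rule DERIV_chain2[OF poly_DERIV]) (auto intro!: derivative_eq_intros)
    then show "(\<lambda>x. poly ((pderiv ^^ n) q) (x - w)) field_differentiable at x"
      using field_differentiable_def by blast
  qed
  then show ?thesis unfolding germ1_at_def by blast
qed

lemma germ1_const: "germ1_at p (\<lambda>x. c)"
  using germ1_poly[of p "[:c:]" 0] by simp

lemma germ1_sub: "germ1_at p f \<Longrightarrow> germ1_at p g \<Longrightarrow> germ1_at p (\<lambda>x. f x - g x)"
  using germ1_lin[of p f g 1 "-1"] by simp

lemma vf1_transfer:
  assumes "vf1_at p f" "eventually (\<lambda>x. f x = g x) (nhds p)"
  shows "vf1_at p g"
proof -
  have "eventually (\<lambda>x. fst (f x) = fst (g x)) (nhds p)"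
       "eventually (\<lambda>x. snd (f x) = snd (g x)) (nhds p)"
    using assms(2) by (auto elim: eventually_mono)
  then show ?thesis
    using assms(1) germ1_transfer[of p "\<lambda>x. fst (f x)" "\<lambda>x. fst (g x)"]
      germ1_transfer[of p "\<lambda>x. snd (f x)" "\<lambda>x. snd (g x)"]
    unfolding vf1_at_def by blast
qed

lemma vf1_const: "vf1_at p (\<lambda>x. c)"
  unfolding vf1_at_def by (simp add: germ1_const)

lemma vf1_neg: "vf1_at p f \<Longrightarrow> vf1_at p (\<lambda>x. - f x)"
  unfolding vf1_at_def using germ1_lin[of p _ _ "-1" 0] by fastforce

lemma vf1_poly: "vf1_at z (\<lambda>x. (poly q1 (x - w), poly q2 (x - w)))"
  unfolding vf1_at_def by (simp add: germ1_poly)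

section \<open>Polynomials in two variables\<close>

definition mpoly :: "('a::real_normed_field \<times> nat \<times> nat) list \<Rightarrow> 'a \<times> 'a \<Rightarrow> 'a" where
  "mpoly L p = (\<Sum>(c,a,b)\<leftarrow>L. c * fst p ^ a * snd p ^ b)"

definition homog :: "nat \<Rightarrow> ('a::real_normed_field \<times> nat \<times> nat) list \<Rightarrow> bool" where
  "homog d L \<longleftrightarrow> (\<forall>(c,a,b)\<in>set L. c \<noteq> 0 \<longrightarrow> a + b = d)"

definition homog_poly :: "nat \<Rightarrow> ('a::real_normed_field \<times> 'a \<Rightarrow> 'a) \<Rightarrow> bool" where
  "homog_poly d f \<longleftrightarrow> (\<exists>L. f = mpoly L \<and> homog d L)"

definition dx_monos :: "('a::real_normed_field \<times> nat \<times> nat) list \<Rightarrow> ('a \<times> nat \<times> nat) list" where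
  "dx_monos L = map (\<lambda>(c,a,b). (c * of_nat a, a - 1, b)) L"

definition dy_monos :: "('a::real_normed_field \<times> nat \<times> nat) list \<Rightarrow> ('a \<times> nat \<times> nat) list" where
  "dy_monos L = map (\<lambda>(c,a,b). (c * of_nat b, a, b - 1)) L"

lemma mpoly_Nil[simp]: "mpoly [] p = 0" by (simp add: mpoly_def)
lemma mpoly_Cons[simp]: "mpoly ((c,a,b)#L) p = c * fst p ^ a * snd p ^ b + mpoly L p" by (simp add: mpoly_def)
lemma mpoly_append[simp]: "mpoly (L @ L') p = mpoly L p + mpoly L' p" by (simp add: mpoly_def)

lemma mpoly_deriv1: "((\<lambda>t. mpoly L (t, y)) has_field_derivative mpoly (dx_monos L) (x, y)) (at x)"
proof (induction L)
  case Nil then show ?case by (simp add: dx_monos_def)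
next
  case (Cons e L)
  obtain c a b where e: "e = (c,a,b)" by (cases e)
  have "((\<lambda>t. c * t ^ a * y ^ b) has_field_derivative c * (of_nat a * (1 * x ^ (a - Suc 0))) * y ^ b) (at x)"
    by (intro DERIV_cmult_right DERIV_cmult DERIV_power DERIV_ident)
  then have "((\<lambda>t. c * t ^ a * y ^ b + mpoly L (t, y)) has_field_derivative
      c * (of_nat a * (1 * x ^ (a - Suc 0))) * y ^ b + mpoly (dx_monos L) (x, y)) (at x)"
    using Cons by (intro DERIV_add)
  then show ?case by (simp add: e dx_monos_def mult_ac)
qed

lemma mpoly_deriv2: "((\<lambda>t. mpoly L (x, t)) has_field_derivative mpoly (dy_monos L) (x, y)) (at y)"
proof (induction L)
  case Nil then show ?case by (simp add: dy_monos_def)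
next
  case (Cons e L)
  obtain c a b where e: "e = (c,a,b)" by (cases e)
  have "((\<lambda>t. c * x ^ a * t ^ b) has_field_derivative c * x ^ a * (of_nat b * (1 * y ^ (b - Suc 0)))) (at y)"
    by (intro DERIV_cmult DERIV_power DERIV_ident)
  then have "((\<lambda>t. c * x ^ a * t ^ b + mpoly L (x, t)) has_field_derivative
      c * x ^ a * (of_nat b * (1 * y ^ (b - Suc 0))) + mpoly (dy_monos L) (x, y)) (at y)"
    using Cons by (intro DERIV_add)
  then show ?case by (simp add: e dy_monos_def mult_ac)
qed

lemma partial1_mpoly: "partial1 (mpoly L) = mpoly (dx_monos L)"
  by (auto simp: partial1_def intro!: DERIV_imp_deriv mpoly_deriv1)

lemma partial2_mpoly: "partial2 (mpoly L) = mpoly (dy_monos L)"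
  by (auto simp: partial2_def intro!: DERIV_imp_deriv mpoly_deriv2)

lemma mpoly_cont: "continuous_on UNIV (mpoly L)"
proof (induction L)
  case Nil then show ?case by (simp add: mpoly_def)
next
  case (Cons e L)
  obtain c a b where e: "e = (c,a,b)" by (cases e)
  have "continuous_on UNIV (\<lambda>p::'a\<times>'a. c * fst p ^ a * snd p ^ b + mpoly L p)"
    using Cons by (intro continuous_intros)
  then show ?case by (simp add: e)
qed

lemma germ2_mpoly: "germ2_at0 (mpoly L)"
  unfolding germ2_at0_def smooth2_on_def
  apply (rule exI[of _ UNIV], simp)
  apply (rule exI[of _ "range mpoly"])
  using mpoly_cont
  by (auto simp: partial1_mpoly partial2_mpoly field_differentiable_def intro: mpoly_deriv1 mpoly_deriv2)

lemma homog_dx_monos: "homog d L \<Longrightarrow> homog (d - 1) (dx_monos L)"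
  by (auto simp: homog_def dx_monos_def)

lemma homog_dy_monos: "homog d L \<Longrightarrow> homog (d - 1) (dy_monos L)"
  by (auto simp: homog_def dy_monos_def)

lemma mpoly_at0: "homog e L \<Longrightarrow> 0 < e \<Longrightarrow> mpoly L (0, 0) = 0"
proof (induction L)
  case Nil then show ?case by simp
next
  case (Cons x L)
  obtain c a b where e: "x = (c,a,b)" by (cases x)
  have "homog e L" using Cons.prems by (auto simp: homog_def)
  moreover have "c * 0 ^ a * 0 ^ b = (0::'a)"
    using Cons.prems by (cases "c = 0") (auto simp: homog_def e zero_power)
  ultimately show ?case using Cons by (simp add: e)
qed

lemma iter_dy_monos: "(partial2 ^^ b) (mpoly L) = mpoly ((dy_monos ^^ b) L)"
  by (induction b) (simp_all add: partial2_mpoly)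

lemma iter_dx_monos: "(partial1 ^^ a) (mpoly L) = mpoly ((dx_monos ^^ a) L)"
  by (induction a) (simp_all add: partial1_mpoly)

lemma homog_iter_dy_monos: "homog d L \<Longrightarrow> homog (d - b) ((dy_monos ^^ b) L)"
  by (induction b) (auto dest: homog_dy_monos simp: diff_Suc)

lemma homog_iter_dx_monos: "homog d L \<Longrightarrow> homog (d - b) ((dx_monos ^^ b) L)"
  by (induction b) (auto dest: homog_dx_monos simp: diff_Suc)

lemma homog_poly_m0: "homog_poly d f \<Longrightarrow> m0 d f"
  unfolding homog_poly_def m0_def
proof (elim exE conjE, intro conjI allI impI)
  fix L assume f: "f = mpoly L" and h: "homog d L"
  show "germ2_at0 f" using f germ2_mpoly by blast
  fix a b assume ab: "a + b < d"
  have "homog (d - b - a) ((dx_monos ^^ a) ((dy_monos ^^ b) L))" using homog_iter_dx_monos homog_iter_dy_monos h by blast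
  then show "(partial1 ^^ a) ((partial2 ^^ b) f) (0, 0) = 0"
    using ab by (simp add: f iter_dx_monos iter_dy_monos mpoly_at0)
qed

fun mono_mult :: "('a::real_normed_field \<times> nat \<times> nat) \<Rightarrow> ('a \<times> nat \<times> nat) \<Rightarrow> ('a \<times> nat \<times> nat)" where
  "mono_mult (c,a,b) (c',a',b') = (c*c', a+a', b+b')"

fun monos_mult :: "('a::real_normed_field \<times> nat \<times> nat) list \<Rightarrow> ('a \<times> nat \<times> nat) list \<Rightarrow> ('a \<times> nat \<times> nat) list" where
  "monos_mult [] L' = []"
| "monos_mult (x#L) L' = map (mono_mult x) L' @ monos_mult L L'"

lemma mpoly_map_mono_mult: "mpoly (map (mono_mult (c,a,b)) L') p = (c * fst p ^ a * snd p ^ b) * mpoly L' p"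
proof (induction L')
  case Nil then show ?case by simp
next
  case (Cons e L')
  obtain c' a' b' where e: "e = (c',a',b')" by (cases e)
  show ?case using Cons by (simp add: e power_add algebra_simps)
qed

lemma mpoly_monos_mult: "mpoly (monos_mult L L') p = mpoly L p * mpoly L' p"
proof (induction L)
  case Nil then show ?case by simp
next
  case (Cons e L)
  obtain c a b where e: "e = (c,a,b)" by (cases e)
  show ?case using Cons by (simp add: e mpoly_map_mono_mult algebra_simps)
qed

lemma homog_monos_mult: "homog d L \<Longrightarrow> homog e L' \<Longrightarrow> homog (d + e) (monos_mult L L')"
proof (induction L)
  case Nil then show ?case by (simp add: homog_def)
next
  case (Cons x L)
  obtain c a b where x: "x = (c,a,b)" by (cases x)
  have "homog d L" using Cons.prems by (auto simp: homog_def)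
  then have 1: "homog (d + e) (monos_mult L L')" using Cons by blast
  have 2: "homog (d + e) (map (mono_mult x) L')"
    using Cons.prems by (fastforce simp: homog_def x)
  show ?case using 1 2 by (auto simp: homog_def x)
qed

lemma homog_poly_mult: "homog_poly d f \<Longrightarrow> homog_poly e g \<Longrightarrow> homog_poly (d + e) (\<lambda>p. f p * g p)"
  unfolding homog_poly_def
  by (metis (no_types, lifting) ext mpoly_monos_mult homog_monos_mult)

lemma homog_poly_add: "homog_poly d f \<Longrightarrow> homog_poly d g \<Longrightarrow> homog_poly d (\<lambda>p. f p + g p)"
  unfolding homog_poly_def
proof (elim exE conjE)
  fix L L' assume "f = mpoly L" "homog d L" "g = mpoly L'" "homog d L'"
  then show "\<exists>L''. (\<lambda>p. f p + g p) = mpoly L'' \<and> homog d L''"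
    by (intro exI[of _ "L @ L'"]) (auto simp: homog_def)
qed

lemma homog_poly_const: "homog_poly 0 (\<lambda>p. c)"
  unfolding homog_poly_def by (rule exI[of _ "[(c,0,0)]"]) (auto simp: homog_def)

lemma homog_poly_zero: "homog_poly d (\<lambda>p. 0)"
  unfolding homog_poly_def by (rule exI[of _ "[]"]) (auto simp: homog_def)

lemma homog_poly_fst: "homog_poly 1 fst"
  unfolding homog_poly_def by (rule exI[of _ "[(1,1,0)]"]) (auto simp: homog_def)

lemma homog_poly_snd: "homog_poly 1 snd"
  unfolding homog_poly_def by (rule exI[of _ "[(1,0,1)]"]) (auto simp: homog_def)

lemma homog_poly_scale: "homog_poly d f \<Longrightarrow> homog_poly d (\<lambda>p. c * f p)"
  using homog_poly_mult[OF homog_poly_const] by fastforce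

lemma homog_poly_lin: "homog_poly 1 (\<lambda>p. c * fst p + c' * snd p)"
  using homog_poly_add[OF homog_poly_scale[OF homog_poly_fst, of c] homog_poly_scale[OF homog_poly_snd, of c']]
  by simp

lemma homog_poly_diff: "homog_poly d f \<Longrightarrow> homog_poly d g \<Longrightarrow> homog_poly d (\<lambda>p. f p - g p)"
  using homog_poly_add[of d f "\<lambda>p. (-1) * g p"] homog_poly_scale[of d g "-1"] by simp

lemma homog_poly_prod: "finite S \<Longrightarrow> (\<forall>x\<in>S. homog_poly 1 (g x)) \<Longrightarrow> homog_poly (card S) (\<lambda>p. \<Prod>x\<in>S. g x p)"
proof (induction S rule: finite_induct)
  case empty then show ?case using homog_poly_const[of 1] by simp
next
  case (insert x F)
  have "homog_poly (1 + card F) (\<lambda>p. g x p * (\<Prod>x\<in>F. g x p))"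
    using insert by (intro homog_poly_mult) auto
  then show ?case using insert by simp
qed

lemma homog_poly_sum: "finite S \<Longrightarrow> (\<forall>x\<in>S. homog_poly d (g x)) \<Longrightarrow> homog_poly d (\<lambda>p. \<Sum>x\<in>S. g x p)"
proof (induction S rule: finite_induct)
  case empty then show ?case using homog_poly_zero by simp
next
  case (insert x F)
  then show ?case by (simp add: homog_poly_add)
qed

lemma homog_poly_pow: "homog_poly 1 f \<Longrightarrow> homog_poly n (\<lambda>p. f p ^ n)"
proof (induction n)
  case 0 then show ?case by (simp add: homog_poly_const)
next
  case (Suc n) then show ?case using homog_poly_mult[of 1 f n "\<lambda>p. f p ^ n"] by simp
qed

lemma mpoly_homog: "homog d L \<Longrightarrow> mpoly L (r * x, r * y) = r ^ d * mpoly L (x, y)"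
proof (induction L)
  case Nil then show ?case by simp
next
  case (Cons e L)
  obtain c a b where e: "e = (c,a,b)" by (cases e)
  have "homog d L" using Cons.prems by (auto simp: homog_def)
  then have IH: "mpoly L (r * x, r * y) = r ^ d * mpoly L (x, y)" using Cons by blast
  have "c * (r * x) ^ a * (r * y) ^ b = r ^ d * (c * x ^ a * y ^ b)"
  proof (cases "c = 0")
    case False
    then have "a + b = d" using Cons.prems by (auto simp: homog_def e)
    then show ?thesis by (auto simp: power_mult_distrib power_add algebra_simps)
  qed simp
  then show ?case using IH by (simp add: e algebra_simps)
qed

lemma homog_poly_scaling: "homog_poly d f \<Longrightarrow> f (r * x, r * y) = r ^ d * f (x, y)"
  unfolding homog_poly_def using mpoly_homog by blast

lemma mpoly_line: "\<exists>q. \<forall>t. mpoly L (x1 + t * y1, x2 + t * y2) = poly q t"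
proof (induction L)
  case Nil then show ?case by (intro exI[of _ 0]) simp
next
  case (Cons e L)
  obtain c a b where e: "e = (c,a,b)" by (cases e)
  obtain q where q: "\<forall>t. mpoly L (x1 + t * y1, x2 + t * y2) = poly q t" using Cons by blast
  show ?case
    by (rule exI[of _ "smult c ([:x1, y1:] ^ a * [:x2, y2:] ^ b) + q"])
       (simp add: e q poly_power algebra_simps)
qed

lemma homog_poly_line: "homog_poly d f \<Longrightarrow> \<exists>q. \<forall>t. f (x1 + t * y1, x2 + t * y2) = poly q t"
  unfolding homog_poly_def using mpoly_line by blast

section \<open>The homogeneous part of a germ in \<open>m_0^d\<close>\<close>

text \<open>The Taylor polynomial of degree \<open>d\<close> at the origin: the monomial \<open>x^a y^{d-a}\<close> gets the
  coefficient \<open>D a / (a! (d-a)!)\<close>, where \<open>D a\<close> is the prescribed partial derivative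
  \<open>\<partial>_x^a \<partial>_y^{d-a}\<close> at the origin.\<close>

definition taylor_monos :: "nat \<Rightarrow> (nat \<Rightarrow> 'a::real_normed_field) \<Rightarrow> ('a \<times> nat \<times> nat) list" where
  "taylor_monos d D = map (\<lambda>a. (D a / (fact a * fact (d - a)), a, d - a)) [0..<Suc d]"

lemma homog_taylor_monos: "homog d (taylor_monos d D)"
  by (auto simp: homog_def taylor_monos_def)

lemma iter_dy_monos_formula: "(dy_monos ^^ b) L = map (\<lambda>(c,a,b'). (c * of_nat (\<Prod>i<b. b' - i), a, b' - b)) L"
proof (induction b)
  case 0 then show ?case by (simp add: case_prod_unfold)
next
  case (Suc b)
  show ?case by (simp only: funpow.simps comp_apply Suc) (simp add: dy_monos_def case_prod_unfold prod.lessThan_Suc mult.assoc)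
qed

lemma iter_dx_monos_formula: "(dx_monos ^^ a) L = map (\<lambda>(c,a',b). (c * of_nat (\<Prod>i<a. a' - i), a' - a, b)) L"
proof (induction a)
  case 0 then show ?case by (simp add: case_prod_unfold)
next
  case (Suc a)
  show ?case by (simp only: funpow.simps comp_apply Suc) (simp add: dx_monos_def case_prod_unfold prod.lessThan_Suc mult.assoc)
qed

lemma prod_fact: "(\<Prod>i<n. n - i) = fact n"
  using fact_prod_rev[of n, where 'a=nat] by (simp add: atLeast0LessThan)

lemma taylor_monos_value:
  assumes "a \<le> d"
  shows "(partial1 ^^ a) ((partial2 ^^ (d - a)) (mpoly (taylor_monos d D))) (0, 0) = D a"
proof -
  define g where "g a' = D a' / (fact a' * fact (d - a')) * of_nat (\<Prod>i<d - a. (d - a') - i)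
      * of_nat (\<Prod>i<a. a' - i) * (0::'a) ^ (a' - a) * 0 ^ ((d - a') - (d - a))" for a'
  have val: "(partial1 ^^ a) ((partial2 ^^ (d - a)) (mpoly (taylor_monos d D))) (0, 0) = (\<Sum>a'\<in>{0..<Suc d}. g a')"
    unfolding iter_dy_monos iter_dx_monos iter_dx_monos_formula iter_dy_monos_formula
    by (simp add: taylor_monos_def mpoly_def g_def sum_set_upt_conv_sum_list_nat[symmetric] o_def algebra_simps)
  have z: "g a' = 0" if "a' \<noteq> a" for a'
  proof (cases "a' < a")
    case True
    then have "(\<Prod>i<a. a' - i) = 0" by (intro prod_zero) auto
    then show ?thesis by (simp add: g_def)
  next
    case False
    then have "a < a'" using that by simp
    then show ?thesis by (simp add: g_def)
  qed
  have "(\<Sum>a'\<in>{0..<Suc d}. g a') = g a + (\<Sum>a'\<in>{0..<Suc d} - {a}. g a')"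
    using assms by (intro sum.remove) auto
  also have "(\<Sum>a'\<in>{0..<Suc d} - {a}. g a') = 0" using z by (intro sum.neutral) auto
  also have "g a = D a"
    unfolding g_def prod_fact diff_self_eq_0 power_0 of_nat_fact by simp
  finally show ?thesis using val by simp
qed

text \<open>Smooth germs in two variables are witnessed by families of functions closed under
  both partial derivatives; differences of germs are handled family-wise.\<close>

lemma slice1_open: "open U \<Longrightarrow> open {t. (t, y) \<in> U}"
proof -
  assume "open U"
  then have "open ((\<lambda>t. (t, y)) -` U)" by (intro open_vimage continuous_intros)
  then show ?thesis by (simp add: vimage_def)
qed

lemma slice2_open: "open U \<Longrightarrow> open {t. (x, t) \<in> U}"
proof -
  assume "open U"
  then have "open ((\<lambda>t. (x, t)) -` U)" by (intro open_vimage continuous_intros)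
  then show ?thesis by (simp add: vimage_def)
qed

definition smooth_family :: "('a::real_normed_field \<times> 'a) set \<Rightarrow> (('a \<times> 'a \<Rightarrow> 'a) set) \<Rightarrow> bool" where
  "smooth_family U F \<longleftrightarrow> (\<forall>h\<in>F. continuous_on U h \<and>
        (\<forall>x y. (x, y) \<in> U \<longrightarrow> (\<lambda>t. h (t, y)) field_differentiable (at x)
                               \<and> (\<lambda>t. h (x, t)) field_differentiable (at y)) \<and>
        partial1 h \<in> F \<and> partial2 h \<in> F)"

lemma smooth2_on_family: "smooth2_on U g \<longleftrightarrow> open U \<and> (\<exists>F. g \<in> F \<and> smooth_family U F)"
  unfolding smooth2_on_def smooth_family_def by blast

lemma smooth_family_mono: "smooth_family U F \<Longrightarrow> V \<subseteq> U \<Longrightarrow> smooth_family V F"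
  unfolding smooth_family_def by (meson continuous_on_subset subsetD)

lemma diff_partial1:
  assumes U: "open U" "(x, y) \<in> U" and F: "smooth_family U F" "f \<in> F" and G: "smooth_family U G" "g \<in> G"
    and h: "\<forall>p\<in>U. h p = f p - g p"
  shows "((\<lambda>t. h (t, y)) has_field_derivative partial1 f (x, y) - partial1 g (x, y)) (at x)"
proof -
  have df: "(\<lambda>t. f (t, y)) field_differentiable (at x)" using F U unfolding smooth_family_def by blast
  have dg: "(\<lambda>t. g (t, y)) field_differentiable (at x)" using G U unfolding smooth_family_def by blast
  have "((\<lambda>t. f (t, y) - g (t, y)) has_field_derivative partial1 f (x, y) - partial1 g (x, y)) (at x)"
    unfolding partial1_def using field_differentiable_derivI[OF df] field_differentiable_derivI[OF dg]
    by (simp add: DERIV_diff)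
  then show ?thesis
    by (rule has_field_derivative_transform_within_open[OF _ slice1_open[OF U(1)]]) (use U h in auto)
qed

lemma diff_partial2:
  assumes U: "open U" "(x, y) \<in> U" and F: "smooth_family U F" "f \<in> F" and G: "smooth_family U G" "g \<in> G"
    and h: "\<forall>p\<in>U. h p = f p - g p"
  shows "((\<lambda>t. h (x, t)) has_field_derivative partial2 f (x, y) - partial2 g (x, y)) (at y)"
proof -
  have df: "(\<lambda>t. f (x, t)) field_differentiable (at y)" using F U unfolding smooth_family_def by blast
  have dg: "(\<lambda>t. g (x, t)) field_differentiable (at y)" using G U unfolding smooth_family_def by blast
  have "((\<lambda>t. f (x, t) - g (x, t)) has_field_derivative partial2 f (x, y) - partial2 g (x, y)) (at y)"
    unfolding partial2_def using field_differentiable_derivI[OF df] field_differentiable_derivI[OF dg]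
    by (simp add: DERIV_diff)
  then show ?thesis
    by (rule has_field_derivative_transform_within_open[OF _ slice2_open[OF U(1)]]) (use U h in auto)
qed

lemma partial_diff_on:
  assumes D: "D = partial1 \<or> D = partial2"
    and U: "open U" and F: "smooth_family U F" "f \<in> F" and G: "smooth_family U G" "g \<in> G"
    and h: "\<forall>p\<in>U. h p = f p - g p"
  shows "\<forall>p\<in>U. D h p = D f p - D g p"
  using D
proof
  assume "D = partial1"
  then show ?thesis
    using diff_partial1[OF U _ F G h] by (auto simp: partial1_def[of h] intro!: DERIV_imp_deriv)
next
  assume "D = partial2"
  then show ?thesis
    using diff_partial2[OF U _ F G h] by (auto simp: partial2_def[of h] intro!: DERIV_imp_deriv)
qed

lemma smooth_family_iter:
  assumes "smooth_family U F" "f \<in> F" "D = partial1 \<or> D = partial2"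
  shows "(D ^^ n) f \<in> F"
proof (induction n)
  case (Suc n)
  then have "partial1 ((D ^^ n) f) \<in> F" "partial2 ((D ^^ n) f) \<in> F"
    using assms(1) unfolding smooth_family_def by blast+
  then show ?case using assms(3) by auto
qed (use assms(2) in simp)

lemma iter_partial_diff_on:
  assumes D: "D = partial1 \<or> D = partial2"
    and U: "open U" and F: "smooth_family U F" "f \<in> F" and G: "smooth_family U G" "g \<in> G"
    and h: "\<forall>p\<in>U. h p = f p - g p"
  shows "\<forall>p\<in>U. (D ^^ n) h p = (D ^^ n) f p - (D ^^ n) g p"
proof (induction n)
  case (Suc n)
  show ?case
    using partial_diff_on[OF D U F(1) smooth_family_iter[OF F D] G(1) smooth_family_iter[OF G D] Suc]
    by simp
qed (use h in simp)

lemma smooth_family_diff: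
  assumes U: "open U" and F: "smooth_family U F" and G: "smooth_family U G"
  shows "smooth_family U {h. \<exists>f\<in>F. \<exists>g\<in>G. \<forall>p\<in>U. h p = f p - g p}"
  unfolding smooth_family_def
proof (intro ballI conjI allI impI)
  fix h assume "h \<in> {h. \<exists>f\<in>F. \<exists>g\<in>G. \<forall>p\<in>U. h p = f p - g p}"
  then obtain f g where fg: "f \<in> F" "g \<in> G" "\<forall>p\<in>U. h p = f p - g p" by blast
  have "continuous_on U (\<lambda>p. f p - g p)"
    using F G fg unfolding smooth_family_def by (intro continuous_intros) auto
  then show "continuous_on U h" using fg(3) continuous_on_eq by (metis (no_types, lifting))
  show "(\<lambda>t. h (t, y)) field_differentiable at x" if "(x, y) \<in> U" for x y
    using diff_partial1[OF U that F fg(1) G fg(2) fg(3)] field_differentiable_def by blast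
  show "(\<lambda>t. h (x, t)) field_differentiable at y" if "(x, y) \<in> U" for x y
    using diff_partial2[OF U that F fg(1) G fg(2) fg(3)] field_differentiable_def by blast
  have "partial1 f \<in> F" "partial1 g \<in> G" "partial2 f \<in> F" "partial2 g \<in> G"
    using F G fg unfolding smooth_family_def by auto
  then show "partial1 h \<in> {h. \<exists>f\<in>F. \<exists>g\<in>G. \<forall>p\<in>U. h p = f p - g p}"
    and "partial2 h \<in> {h. \<exists>f\<in>F. \<exists>g\<in>G. \<forall>p\<in>U. h p = f p - g p}"
    using partial_diff_on[OF _ U F fg(1) G fg(2) fg(3)] by blast+
qed

lemma germ2_diff:
  assumes "germ2_at0 f" "germ2_at0 g"
  shows "germ2_at0 (\<lambda>p. f p - g p) \<and>
    (\<forall>a b. (partial1 ^^ a) ((partial2 ^^ b) (\<lambda>p. f p - g p)) (0, 0)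
       = (partial1 ^^ a) ((partial2 ^^ b) f) (0, 0) - (partial1 ^^ a) ((partial2 ^^ b) g) (0, 0))"
proof -
  obtain U1 F1 where 1: "(0,0) \<in> U1" "open U1" "f \<in> F1" "smooth_family U1 F1"
    using assms(1) unfolding germ2_at0_def smooth2_on_family by blast
  obtain U2 F2 where 2: "(0,0) \<in> U2" "open U2" "g \<in> F2" "smooth_family U2 F2"
    using assms(2) unfolding germ2_at0_def smooth2_on_family by blast
  define U where "U = U1 \<inter> U2"
  have U: "open U" "(0,0) \<in> U" using 1 2 U_def by auto
  have F1: "smooth_family U F1" using smooth_family_mono[OF 1(4)] U_def by blast
  have F2: "smooth_family U F2" using smooth_family_mono[OF 2(4)] U_def by blast
  define Fd where "Fd = {h. \<exists>f\<in>F1. \<exists>g\<in>F2. \<forall>p\<in>U. h p = f p - g p}"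
  have "smooth_family U Fd" unfolding Fd_def by (rule smooth_family_diff[OF U(1) F1 F2])
  moreover have "(\<lambda>p. f p - g p) \<in> Fd" using 1 2 unfolding Fd_def by blast
  ultimately have "germ2_at0 (\<lambda>p. f p - g p)"
    unfolding germ2_at0_def smooth2_on_family using U by blast
  moreover have "(partial1 ^^ a) ((partial2 ^^ b) (\<lambda>p. f p - g p)) p
       = (partial1 ^^ a) ((partial2 ^^ b) f) p - (partial1 ^^ a) ((partial2 ^^ b) g) p"
    if "p \<in> U" for a b p
  proof -
    have b: "\<forall>p\<in>U. (partial2 ^^ b) (\<lambda>p. f p - g p) p = (partial2 ^^ b) f p - (partial2 ^^ b) g p"
      by (rule iter_partial_diff_on[OF _ U(1) F1 1(3) F2 2(3)]) simp_all
    have "\<forall>p\<in>U. (partial1 ^^ a) ((partial2 ^^ b) (\<lambda>p. f p - g p)) p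
       = (partial1 ^^ a) ((partial2 ^^ b) f) p - (partial1 ^^ a) ((partial2 ^^ b) g) p"
      by (rule iter_partial_diff_on[OF _ U(1) F1 smooth_family_iter[OF F1 1(3)]
          F2 smooth_family_iter[OF F2 2(3)] b]) simp_all
    then show ?thesis using that by blast
  qed
  ultimately show ?thesis using U(2) by blast
qed

lemma m0_diff: "m0 d f \<Longrightarrow> m0 d g \<Longrightarrow> m0 d (\<lambda>p. f p - g p)"
  unfolding m0_def using germ2_diff by fastforce

lemma m0_homogeneous_part:
  assumes "m0 d f"
  shows "\<exists>L. homog d L \<and> m0 (Suc d) (\<lambda>p. f p - mpoly L p)"
proof -
  define D where "D a = (partial1 ^^ a) ((partial2 ^^ (d - a)) f) (0, 0)" for a
  define L where "L = taylor_monos d D"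
  have h: "homog d L" using homog_taylor_monos L_def by blast
  have mL: "m0 d (mpoly L)" using homog_poly_m0 h homog_poly_def by blast
  have gf: "germ2_at0 f" using assms m0_def by blast
  have gL: "germ2_at0 (mpoly L)" using germ2_mpoly by blast
  have "m0 (Suc d) (\<lambda>p. f p - mpoly L p)"
    unfolding m0_def
  proof (intro conjI allI impI)
    show "germ2_at0 (\<lambda>p. f p - mpoly L p)" using germ2_diff[OF gf gL] by blast
    fix a b assume ab: "a + b < Suc d"
    have e: "(partial1 ^^ a) ((partial2 ^^ b) (\<lambda>p. f p - mpoly L p)) (0, 0)
       = (partial1 ^^ a) ((partial2 ^^ b) f) (0, 0) - (partial1 ^^ a) ((partial2 ^^ b) (mpoly L)) (0, 0)"
      using germ2_diff[OF gf gL] by blast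
    show "(partial1 ^^ a) ((partial2 ^^ b) (\<lambda>p. f p - mpoly L p)) (0, 0) = 0"
    proof (cases "a + b < d")
      case True then show ?thesis using e assms mL unfolding m0_def by simp
    next
      case False
      then have b: "b = d - a" "a \<le> d" using ab by auto
      show ?thesis using e taylor_monos_value[OF b(2), of D] unfolding b(1) L_def D_def by simp
    qed
  qed
  then show ?thesis using h by blast
qed

section \<open>The kernel relation: linearity and locality\<close>

lemma psmul_neg: "psmul c (- v) = - psmul c v" by (simp add: psmul_def)
lemma psmul_zero: "psmul c 0 = 0" by (simp add: psmul_def zero_prod_def)
lemma psmul_zero_left: "psmul 0 v = 0" by (simp add: psmul_def zero_prod_def)
lemma psmul_diff_left: "psmul (a - b) v = psmul a v - psmul b v" by (simp add: psmul_def algebra_simps)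

lemma sum_split_add: "(\<Sum>i<n+m::nat. g i) = (\<Sum>i<n. g i) + (\<Sum>i<m. g (n+i))"
  by (induction m) (simp_all add: add.assoc)

lemma in_pbm_diff:
  assumes "in_pbm J s F l a1" "in_pbm J s F l a2"
  shows "in_pbm J s F l (\<lambda>x. a1 x - a2 x)"
proof -
  obtain N1 :: nat and u1 v1 where 1: "\<forall>i<N1. m0 l (u1 i) \<and> (\<forall>j\<in>J. vf1_at (s j) (v1 i))"
    "\<forall>j\<in>J. eventually (\<lambda>x. a1 x = (\<Sum>i<N1. psmul (u1 i (F j x)) (v1 i x))) (nhds (s j))"
    using assms(1) unfolding in_pbm_def by blast
  obtain N2 :: nat and u2 v2 where 2: "\<forall>i<N2. m0 l (u2 i) \<and> (\<forall>j\<in>J. vf1_at (s j) (v2 i))"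
    "\<forall>j\<in>J. eventually (\<lambda>x. a2 x = (\<Sum>i<N2. psmul (u2 i (F j x)) (v2 i x))) (nhds (s j))"
    using assms(2) unfolding in_pbm_def by blast
  define u where "u i = (if i < N1 then u1 i else u2 (i - N1))" for i
  define v where "v i = (if i < N1 then v1 i else (\<lambda>x. - v2 (i - N1) x))" for i
  have "\<forall>i<N1+N2. m0 l (u i) \<and> (\<forall>j\<in>J. vf1_at (s j) (v i))"
    using 1(1) 2(1) by (auto simp: u_def v_def intro: vf1_neg)
  moreover have "\<forall>j\<in>J. eventually (\<lambda>x. a1 x - a2 x = (\<Sum>i<N1+N2. psmul (u i (F j x)) (v i x))) (nhds (s j))"
  proof
    fix j assume j: "j \<in> J"
    show "eventually (\<lambda>x. a1 x - a2 x = (\<Sum>i<N1+N2. psmul (u i (F j x)) (v i x))) (nhds (s j))"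
      using eventually_conj[OF 1(2)[rule_format, OF j] 2(2)[rule_format, OF j]]
      by (rule eventually_mono) (simp add: sum_split_add u_def v_def psmul_neg sum_negf)
  qed
  ultimately show ?thesis unfolding in_pbm_def by blast
qed

lemma in_TRe_diff:
  assumes "in_TRe J s F a1" "in_TRe J s F a2"
  shows "in_TRe J s F (\<lambda>x. a1 x - a2 x)"
proof -
  obtain e1 where 1: "\<forall>j\<in>J. germ1_at (s j) e1" "\<forall>j\<in>J. eventually (\<lambda>x. a1 x = psmul (e1 x)
              (deriv (\<lambda>t. fst (F j t)) x, deriv (\<lambda>t. snd (F j t)) x)) (nhds (s j))"
    using assms(1) unfolding in_TRe_def by blast
  obtain e2 where 2: "\<forall>j\<in>J. germ1_at (s j) e2" "\<forall>j\<in>J. eventually (\<lambda>x. a2 x = psmul (e2 x)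
              (deriv (\<lambda>t. fst (F j t)) x, deriv (\<lambda>t. snd (F j t)) x)) (nhds (s j))"
    using assms(2) unfolding in_TRe_def by blast
  show ?thesis unfolding in_TRe_def
  proof (rule exI[of _ "\<lambda>x. e1 x - e2 x"], intro conjI ballI)
    fix j assume j: "j \<in> J"
    show "germ1_at (s j) (\<lambda>x. e1 x - e2 x)" using 1 2 j germ1_sub by blast
    show "eventually (\<lambda>x. a1 x - a2 x = psmul (e1 x - e2 x)
              (deriv (\<lambda>t. fst (F j t)) x, deriv (\<lambda>t. snd (F j t)) x)) (nhds (s j))"
      using eventually_conj[OF 1(2)[rule_format, OF j] 2(2)[rule_format, OF j]]
      by (rule eventually_mono) (simp add: psmul_diff_left)
  qed
qed

lemma omega_ker_diff:
  assumes "omega_ker J s F i \<xi>" "omega_ker J s F i \<zeta>"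
  shows "omega_ker J s F i (\<lambda>p. \<xi> p - \<zeta> p)"
proof -
  obtain a1 b1 where 1: "in_TRe J s F a1" "in_pbm J s F i a1" "in_pbm J s F (Suc i) b1"
     "\<forall>j\<in>J. eventually (\<lambda>x. \<xi> (F j x) = a1 x + b1 x) (nhds (s j))"
    using assms(1) unfolding omega_ker_def by blast
  obtain a2 b2 where 2: "in_TRe J s F a2" "in_pbm J s F i a2" "in_pbm J s F (Suc i) b2"
     "\<forall>j\<in>J. eventually (\<lambda>x. \<zeta> (F j x) = a2 x + b2 x) (nhds (s j))"
    using assms(2) unfolding omega_ker_def by blast
  show ?thesis unfolding omega_ker_def
  proof (intro exI conjI ballI)
    show "in_TRe J s F (\<lambda>x. a1 x - a2 x)" using 1 2 in_TRe_diff by blast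
    show "in_pbm J s F i (\<lambda>x. a1 x - a2 x)" using 1 2 in_pbm_diff by blast
    show "in_pbm J s F (Suc i) (\<lambda>x. b1 x - b2 x)" using 1 2 in_pbm_diff by blast
    fix j assume j: "j \<in> J"
    show "eventually (\<lambda>x. \<xi> (F j x) - \<zeta> (F j x) = (a1 x - a2 x) + (b1 x - b2 x)) (nhds (s j))"
      using eventually_conj[OF 1(4)[rule_format, OF j] 2(4)[rule_format, OF j]]
      by (rule eventually_mono) (simp add: algebra_simps)
  qed
qed

lemma in_TRe_mono: "in_TRe J s F a \<Longrightarrow> J' \<subseteq> J \<Longrightarrow> in_TRe J' s F a"
  unfolding in_TRe_def by blast

lemma in_pbm_mono: "in_pbm J s F l a \<Longrightarrow> J' \<subseteq> J \<Longrightarrow> in_pbm J' s F l a"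
  unfolding in_pbm_def by blast

lemma omega_ker_restrict:
  assumes "omega_ker J s F i \<xi>" "J' \<subseteq> J"
  shows "omega_ker J' s F i \<xi>"
proof -
  obtain a b where "in_TRe J s F a" "in_pbm J s F i a" "in_pbm J s F (Suc i) b"
     "\<forall>j\<in>J. eventually (\<lambda>x. \<xi> (F j x) = a x + b x) (nhds (s j))"
    using assms(1) unfolding omega_ker_def by blast
  then show ?thesis unfolding omega_ker_def using assms(2) in_TRe_mono in_pbm_mono by blast
qed

lemma omega_ker_m0:
  assumes "vf_m0 (Suc i) \<zeta>"
  shows "omega_ker {l} s F i \<zeta>"
  unfolding omega_ker_def
proof (intro exI conjI ballI)
  show "in_TRe {l} s F (\<lambda>x. 0)" unfolding in_TRe_def
    by (rule exI[of _ "\<lambda>x. 0"]) (simp add: germ1_const psmul_zero_left)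
  show "in_pbm {l} s F i (\<lambda>x. 0)" unfolding in_pbm_def
    by (rule exI[of _ 0]) simp
  show "in_pbm {l} s F (Suc i) (\<lambda>x. \<zeta> (F l x))" unfolding in_pbm_def
  proof (intro exI conjI allI impI ballI)
    let ?u = "\<lambda>i p. if i = (0::nat) then fst (\<zeta> p) else snd (\<zeta> p)"
    let ?v = "\<lambda>i x. if i = (0::nat) then (1, 0) else (0::'a, 1::'a)"
    fix i' assume "i' < (2::nat)"
    then show "m0 (Suc i) (?u i')" using assms unfolding vf_m0_def by (cases "i' = 0") auto
    fix j assume "j \<in> {l}"
    show "vf1_at (s j) (?v i')" by (simp add: vf1_const)
  next
    fix j assume j: "j \<in> {l}"
    show "eventually (\<lambda>x. \<zeta> (F l x) = (\<Sum>i<2. psmul (if i = (0::nat) then fst (\<zeta> (F j x)) else snd (\<zeta> (F j x)))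
           (if i = (0::nat) then (1, 0) else (0::'a, 1::'a)))) (nhds (s j))"
      using j by (simp add: psmul_def eval_nat_numeral)
  qed
  fix j assume "j \<in> {l}"
  then show "eventually (\<lambda>x. \<zeta> (F j x) = 0 + \<zeta> (F l x)) (nhds (s j))" by simp
qed

text \<open>Gluing: if a predicate \<open>chi\<close> holds near \<open>s j\<close> and fails near every \<open>s m\<close>, \<open>m \<in> J\<close>,
  witnesses for \<open>J\<close> and for \<open>{j}\<close> can be combined by a case distinction on \<open>chi\<close>.\<close>

lemma germ1_cutoff:
  assumes "eventually chi (nhds p) \<and> germ1_at p f \<or> eventually (\<lambda>x. \<not> chi x) (nhds p) \<and> germ1_at p g"
  shows "germ1_at p (\<lambda>x. if chi x then f x else g x)"
  using assms
proof
  assume a: "eventually chi (nhds p) \<and> germ1_at p f"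
  then have "eventually (\<lambda>x. f x = (if chi x then f x else g x)) (nhds p)"
    by (auto elim: eventually_mono)
  with a show ?thesis using germ1_transfer[of p f "\<lambda>x. if chi x then f x else g x"] by blast
next
  assume a: "eventually (\<lambda>x. \<not> chi x) (nhds p) \<and> germ1_at p g"
  then have "eventually (\<lambda>x. g x = (if chi x then f x else g x)) (nhds p)"
    by (auto elim: eventually_mono)
  with a show ?thesis using germ1_transfer[of p g "\<lambda>x. if chi x then f x else g x"] by blast
qed

lemma vf1_cutoff:
  assumes "eventually chi (nhds p) \<and> vf1_at p f \<or> eventually (\<lambda>x. \<not> chi x) (nhds p) \<and> vf1_at p g"
  shows "vf1_at p (\<lambda>x. if chi x then f x else g x)"
  using assms
proof
  assume a: "eventually chi (nhds p) \<and> vf1_at p f"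
  then have "eventually (\<lambda>x. f x = (if chi x then f x else g x)) (nhds p)"
    by (auto elim: eventually_mono)
  with a show ?thesis using vf1_transfer[of p f "\<lambda>x. if chi x then f x else g x"] by blast
next
  assume a: "eventually (\<lambda>x. \<not> chi x) (nhds p) \<and> vf1_at p g"
  then have "eventually (\<lambda>x. g x = (if chi x then f x else g x)) (nhds p)"
    by (auto elim: eventually_mono)
  with a show ?thesis using vf1_transfer[of p g "\<lambda>x. if chi x then f x else g x"] by blast
qed

lemma in_TRe_glue:
  assumes "in_TRe J s F a1" "in_TRe {j} s F a2"
    and evJ: "\<forall>m\<in>J. eventually (\<lambda>x. \<not> chi x) (nhds (s m))"
    and evj: "eventually chi (nhds (s j))"
  shows "in_TRe (insert j J) s F (\<lambda>x. if chi x then a2 x else a1 x)"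
proof -
  obtain e1 where 1: "\<forall>j\<in>J. germ1_at (s j) e1" "\<forall>j\<in>J. eventually (\<lambda>x. a1 x = psmul (e1 x)
              (deriv (\<lambda>t. fst (F j t)) x, deriv (\<lambda>t. snd (F j t)) x)) (nhds (s j))"
    using assms(1) unfolding in_TRe_def by blast
  obtain e2 where 2: "germ1_at (s j) e2" "eventually (\<lambda>x. a2 x = psmul (e2 x)
              (deriv (\<lambda>t. fst (F j t)) x, deriv (\<lambda>t. snd (F j t)) x)) (nhds (s j))"
    using assms(2) unfolding in_TRe_def by blast
  show ?thesis unfolding in_TRe_def
  proof (rule exI[of _ "\<lambda>x. if chi x then e2 x else e1 x"], intro conjI ballI)
    fix m assume m: "m \<in> insert j J"
    show "germ1_at (s m) (\<lambda>x. if chi x then e2 x else e1 x)"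
      using m 1(1) 2(1) evJ evj by (intro germ1_cutoff) auto
    show "eventually (\<lambda>x. (if chi x then a2 x else a1 x) = psmul (if chi x then e2 x else e1 x)
              (deriv (\<lambda>t. fst (F m t)) x, deriv (\<lambda>t. snd (F m t)) x)) (nhds (s m))"
    proof (cases "m = j")
      case True
      show ?thesis unfolding True using eventually_conj[OF 2(2) evj] by (rule eventually_mono) simp
    next
      case False
      then have m: "m \<in> J" using m by simp
      show ?thesis using eventually_conj[OF 1(2)[rule_format, OF m] evJ[rule_format, OF m]]
        by (rule eventually_mono) simp
    qed
  qed
qed

text \<open>For the module \<open>f^* m_0^l \<theta>(f)\<close> the two generating families are concatenated; each
  vector field is cut off to vanish near the base points of the other witness.\<close>
lemma in_pbm_glue:
  assumes "in_pbm J s F l a1" "in_pbm {j} s F l a2"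
    and evJ: "\<forall>m\<in>J. eventually (\<lambda>x. \<not> chi x) (nhds (s m))"
    and evj: "eventually chi (nhds (s j))"
  shows "in_pbm (insert j J) s F l (\<lambda>x. if chi x then a2 x else a1 x)"
proof -
  obtain N1 :: nat and u1 v1 where 1: "\<forall>i<N1. m0 l (u1 i) \<and> (\<forall>j\<in>J. vf1_at (s j) (v1 i))"
    "\<forall>j\<in>J. eventually (\<lambda>x. a1 x = (\<Sum>i<N1. psmul (u1 i (F j x)) (v1 i x))) (nhds (s j))"
    using assms(1) unfolding in_pbm_def by blast
  obtain N2 :: nat and u2 v2 where 2: "\<forall>i<N2. m0 l (u2 i) \<and> vf1_at (s j) (v2 i)"
    "eventually (\<lambda>x. a2 x = (\<Sum>i<N2. psmul (u2 i (F j x)) (v2 i x))) (nhds (s j))"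
    using assms(2) unfolding in_pbm_def by blast
  define u where "u i = (if i < N1 then u1 i else u2 (i - N1))" for i
  define w1 where "w1 i = (if i < N1 then v1 i else (\<lambda>x. 0))" for i
  define w2 where "w2 i = (if i < N1 then (\<lambda>x. 0) else v2 (i - N1))" for i
  define v where "v i x = (if chi x then w2 i x else w1 i x)" for i x
  have "m0 l (u i) \<and> (\<forall>m\<in>insert j J. vf1_at (s m) (v i))" if i: "i < N1 + N2" for i
  proof (intro conjI ballI)
    show "m0 l (u i)" using 1(1) 2(1) i by (auto simp: u_def)
    have "vf1_at (s j) (w2 i)" using 2(1) i by (auto simp: w2_def vf1_const)
    moreover have "vf1_at (s m) (w1 i)" if "m \<in> J" for m using 1(1) that by (auto simp: w1_def vf1_const)
    ultimately show "vf1_at (s m) (v i)" if "m \<in> insert j J" for m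
      unfolding v_def using that evJ evj by (intro vf1_cutoff) auto
  qed
  moreover have "eventually (\<lambda>x. (if chi x then a2 x else a1 x)
      = (\<Sum>i<N1+N2. psmul (u i (F m x)) (v i x))) (nhds (s m))" if m: "m \<in> insert j J" for m
  proof (cases "m = j")
    case True
    show ?thesis unfolding True using eventually_conj[OF 2(2) evj]
      by (rule eventually_mono) (simp add: sum_split_add u_def v_def w1_def w2_def psmul_zero)
  next
    case False
    then have m: "m \<in> J" using m by simp
    show ?thesis using eventually_conj[OF 1(2)[rule_format, OF m] evJ[rule_format, OF m]]
      by (rule eventually_mono) (simp add: sum_split_add u_def v_def w1_def w2_def psmul_zero)
  qed
  ultimately show ?thesis unfolding in_pbm_def by blast
qed

lemma omega_ker_glue:
  assumes "omega_ker J s F i \<xi>" "omega_ker {j} s F i \<xi>"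
    and evJ: "\<forall>m\<in>J. eventually (\<lambda>x. \<not> chi x) (nhds (s m))"
    and evj: "eventually chi (nhds (s j))"
  shows "omega_ker (insert j J) s F i \<xi>"
proof -
  obtain a1 b1 where 1: "in_TRe J s F a1" "in_pbm J s F i a1" "in_pbm J s F (Suc i) b1"
     "\<forall>m\<in>J. eventually (\<lambda>x. \<xi> (F m x) = a1 x + b1 x) (nhds (s m))"
    using assms(1) unfolding omega_ker_def by blast
  obtain a2 b2 where 2: "in_TRe {j} s F a2" "in_pbm {j} s F i a2" "in_pbm {j} s F (Suc i) b2"
     "eventually (\<lambda>x. \<xi> (F j x) = a2 x + b2 x) (nhds (s j))"
    using assms(2) unfolding omega_ker_def by blast
  show ?thesis unfolding omega_ker_def
  proof (intro exI conjI ballI)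
    show "in_TRe (insert j J) s F (\<lambda>x. if chi x then a2 x else a1 x)"
      using in_TRe_glue[OF 1(1) 2(1) evJ evj] .
    show "in_pbm (insert j J) s F i (\<lambda>x. if chi x then a2 x else a1 x)"
      using in_pbm_glue[OF 1(2) 2(2) evJ evj] .
    show "in_pbm (insert j J) s F (Suc i) (\<lambda>x. if chi x then b2 x else b1 x)"
      using in_pbm_glue[OF 1(3) 2(3) evJ evj] .
    fix m assume m: "m \<in> insert j J"
    show "eventually (\<lambda>x. \<xi> (F m x) = (if chi x then a2 x else a1 x) + (if chi x then b2 x else b1 x)) (nhds (s m))"
    proof (cases "m = j")
      case True
      show ?thesis unfolding True using eventually_conj[OF 2(4) evj] by (rule eventually_mono) simp
    next
      case False
      then have m: "m \<in> J" using m by simp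
      show ?thesis using eventually_conj[OF 1(4)[rule_format, OF m] evJ[rule_format, OF m]]
        by (rule eventually_mono) simp
    qed
  qed
qed

lemma omega_ker_empty: "omega_ker {} s F i \<xi>"
proof -
  have a: "in_TRe {} s F (\<lambda>x. 0)" unfolding in_TRe_def by simp
  have b: "in_pbm {} s F l (\<lambda>x. 0)" for l unfolding in_pbm_def by (rule exI[of _ 0]) simp
  show ?thesis unfolding omega_ker_def using a b by blast
qed

text \<open>Distinct base points can be separated: a small ball around \<open>s j\<close> is eventually
  avoided near each of the finitely many other base points.\<close>
lemma separate_base_point:
  fixes s :: "nat \<Rightarrow> 'a::metric_space"
  assumes "finite J" "s j \<notin> s ` J"
  obtains chi where "eventually chi (nhds (s j))" "\<forall>m\<in>J. eventually (\<lambda>x. \<not> chi x) (nhds (s m))"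
proof -
  obtain d where d: "d > 0" "\<forall>y\<in>s ` J. y \<noteq> s j \<longrightarrow> d \<le> dist (s j) y"
    using finite_set_avoid[of "s ` J" "s j"] assms(1) by blast
  define chi where "chi x = (dist x (s j) < d / 2)" for x
  have "eventually chi (nhds (s j))"
    using eventually_nhds_in_open[of "ball (s j) (d / 2)" "s j"] d(1)
    by (auto simp: chi_def dist_commute elim: eventually_mono)
  moreover have "eventually (\<lambda>x. \<not> chi x) (nhds (s m))" if m: "m \<in> J" for m
  proof (rule eventually_mono[OF eventually_nhds_in_open[of "ball (s m) (d / 2)" "s m"]])
    fix x assume x: "x \<in> ball (s m) (d / 2)"
    have "s m \<in> s ` J" "s m \<noteq> s j" using m assms(2) by (auto simp: image_iff)
    then have "d \<le> dist (s j) (s m)" using d(2) by blast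
    also have "\<dots> \<le> dist (s m) x + dist x (s j)" by (metis dist_commute dist_triangle)
    finally show "\<not> chi x" using x by (auto simp: chi_def)
  qed (use d(1) in auto)
  ultimately show ?thesis using that by blast
qed

lemma omega_ker_all:
  assumes "finite J" "inj_on s J" "\<forall>l\<in>J. omega_ker {l} s F i \<xi>"
  shows "omega_ker J s F i \<xi>"
  using assms
proof (induction J rule: finite_induct)
  case empty show ?case by (simp add: omega_ker_empty)
next
  case (insert x J)
  have "s x \<notin> s ` J" using insert.prems(1) insert.hyps(2) by (auto simp: inj_on_insert)
  then obtain chi where "eventually chi (nhds (s x))" "\<forall>m\<in>J. eventually (\<lambda>x. \<not> chi x) (nhds (s m))"
    using separate_base_point insert.hyps(1) by metis
  moreover have "omega_ker J s F i \<xi>" using insert by (simp add: inj_on_insert)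
  ultimately show ?case using omega_ker_glue insert.prems(2) by blast
qed

section \<open>The kernel criterion for a single cusp branch\<close>

definition cosK :: "(nat \<Rightarrow> real) \<Rightarrow> nat \<Rightarrow> 'a::real_normed_field" where
  "cosK th m = of_real (cos (th m))"

definition sinK :: "(nat \<Rightarrow> real) \<Rightarrow> nat \<Rightarrow> 'a::real_normed_field" where
  "sinK th m = of_real (sin (th m))"

lemma cosK_sinK_sq: "(cosK th b :: 'a::real_normed_field)^2 + sinK th b^2 = 1"
proof -
  have "(cosK th b :: 'a)^2 + sinK th b^2 = of_real ((cos (th b))^2 + (sin (th b))^2)"
    by (simp only: cosK_def sinK_def of_real_add of_real_power)
  then show ?thesis by simp
qed

text \<open>With \<open>t = x - s_b\<close> the branch is \<open>t^2\<close> times the point \<open>R_\<theta>(1, t)\<close> of the line through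
  the tangent direction \<open>(cos \<theta>, sin \<theta>)\<close>.\<close>
lemma cusp_branch_param:
  "cusp_branch th s b x = ((x - s b)^2 * (cosK th b - (x - s b) * sinK th b),
                           (x - s b)^2 * (sinK th b + (x - s b) * cosK th b))"
  by (simp add: cusp_branch_def rot_def cusp_def cosK_def sinK_def algebra_simps
      power2_eq_square power3_eq_cube)

lemma cusp_branch_tangent_form:
  "cosK th b * fst (cusp_branch th s b x) + sinK th b * snd (cusp_branch th s b x) = (x - s b)^2"
proof -
  have "cosK th b * fst (cusp_branch th s b x) + sinK th b * snd (cusp_branch th s b x)
      = (x - s b)^2 * ((cosK th b)^2 + (sinK th b)^2)"
    unfolding cusp_branch_param by (simp add: algebra_simps power2_eq_square)
  then show ?thesis by (simp add: cosK_sinK_sq)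
qed

lemma cusp_branch_deriv:
  "deriv (\<lambda>t. fst (cusp_branch th s b t)) x = (x - s b) * (2 * cosK th b - 3 * sinK th b * (x - s b))"
  "deriv (\<lambda>t. snd (cusp_branch th s b t)) x = (x - s b) * (2 * sinK th b + 3 * cosK th b * (x - s b))"
proof -
  have "((\<lambda>t. fst (cusp_branch th s b t)) has_field_derivative
      (x - s b) * (2 * cosK th b - 3 * sinK th b * (x - s b))) (at x)"
    unfolding cusp_branch_param fst_conv
    by (auto intro!: derivative_eq_intros simp: algebra_simps power2_eq_square)
  then show "deriv (\<lambda>t. fst (cusp_branch th s b t)) x = (x - s b) * (2 * cosK th b - 3 * sinK th b * (x - s b))"
    by (rule DERIV_imp_deriv)
  have "((\<lambda>t. snd (cusp_branch th s b t)) has_field_derivative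
      (x - s b) * (2 * sinK th b + 3 * cosK th b * (x - s b))) (at x)"
    unfolding cusp_branch_param snd_conv
    by (auto intro!: derivative_eq_intros simp: algebra_simps power2_eq_square)
  then show "deriv (\<lambda>t. snd (cusp_branch th s b t)) x = (x - s b) * (2 * sinK th b + 3 * cosK th b * (x - s b))"
    by (rule DERIV_imp_deriv)
qed

lemma homog_poly_on_cusp_branch:
  assumes "homog_poly d f"
  shows "f (cusp_branch th s b x)
    = ((x - s b)^2)^d * f (cosK th b - (x - s b) * sinK th b, sinK th b + (x - s b) * cosK th b)"
  unfolding cusp_branch_param by (rule homog_poly_scaling[OF assms])

lemma in_TRe_poly_mult:
  "in_TRe {b} s F (\<lambda>x. psmul (poly q (x - w)) (deriv (\<lambda>t. fst (F b t)) x, deriv (\<lambda>t. snd (F b t)) x))"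
  unfolding in_TRe_def by (rule exI[of _ "\<lambda>x. poly q (x - w)"]) (simp add: germ1_poly)

lemma in_pbm_single:
  assumes "m0 l u"
  shows "in_pbm {b} s F l (\<lambda>x. psmul (u (F b x)) (poly q1 (x - w), poly q2 (x - w)))"
  unfolding in_pbm_def
  by (rule exI[of _ "1::nat"], rule exI[of _ "\<lambda>i. u"],
      rule exI[of _ "\<lambda>i x. (poly q1 (x - w), poly q2 (x - w))"])
     (simp add: assms vf1_poly)

text \<open>The two linear conditions of the criterion say that the constant coefficient
  \<open>(a10, a20)\<close> is a multiple of the tangent direction \<open>(c, s)\<close>, and fix the normal part of the
  linear coefficient \<open>(a11, a21)\<close> in terms of it.\<close>
lemma cusp_low_coeffs:
  fixes c s a10 a20 a11 a21 :: "'a::field_char_0"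
  assumes nrm: "c^2 + s^2 = 1"
    and C1: "- s * a10 + c * a20 = 0"
    and C2: "2 * (- s * a11 + c * a21) = 3 * (c * a10 + s * a20)"
  defines "A \<equiv> c * a10 + s * a20" and "B \<equiv> c * a11 + s * a21"
  shows "a10 = c * A" "a20 = s * A" "a11 = c * B - 3 * s * A / 2" "a21 = s * B + 3 * c * A / 2"
proof -
  have "c * A = (c^2 + s^2) * a10 + s * (- s * a10 + c * a20)"
    by (simp add: A_def power2_eq_square algebra_simps)
  then show "a10 = c * A" using nrm C1 by simp
  have "s * A = (c^2 + s^2) * a20 - c * (- s * a10 + c * a20)"
    by (simp add: A_def power2_eq_square algebra_simps)
  then show "a20 = s * A" using nrm C1 by simp
  have "2 * (c * B) - s * (2 * (- s * a11 + c * a21)) = 2 * (c^2 + s^2) * a11"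
    by (simp add: B_def power2_eq_square algebra_simps)
  then have "2 * (c * B) - s * (3 * A) = 2 * a11" unfolding C2 nrm A_def by simp
  then show "a11 = c * B - 3 * s * A / 2" by (simp add: field_simps)
  have "2 * (s * B) + c * (2 * (- s * a11 + c * a21)) = 2 * (c^2 + s^2) * a21"
    by (simp add: B_def power2_eq_square algebra_simps)
  then have "2 * (s * B) + c * (3 * A) = 2 * a21" unfolding C2 nrm A_def by simp
  then show "a21 = s * B + 3 * c * A / 2" by (simp add: field_simps)
qed

text \<open>Consequently the restriction \<open>(p1, p2)\<close> splits as \<open>(A + B t)/2\<close> times the tangent
  polynomial \<open>(2c - 3s t, 2s + 3c t)\<close> of the cusp, plus a remainder divisible by \<open>t^2\<close>.\<close>
lemma cusp_line_split:
  fixes c sn :: "'a::field_char_0" and p1 p2 :: "'a poly"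
  assumes nrm: "c^2 + sn^2 = 1"
    and C1: "- sn * coeff p1 0 + c * coeff p2 0 = 0"
    and C2: "2 * (- sn * coeff p1 1 + c * coeff p2 1) - 3 * (c * coeff p1 0 + sn * coeff p2 0) = 0"
  obtains A B w1 w2 where
    "\<And>t. poly p1 t = (A/2 + B/2 * t) * (2 * c - 3 * sn * t) + t^2 * poly w1 t"
    "\<And>t. poly p2 t = (A/2 + B/2 * t) * (2 * sn + 3 * c * t) + t^2 * poly w2 t"
proof -
  obtain a10 a11 r1 where P1: "p1 = pCons a10 (pCons a11 r1)" by (metis pCons_cases)
  obtain a20 a21 r2 where P2: "p2 = pCons a20 (pCons a21 r2)" by (metis pCons_cases)
  define A where "A = c * a10 + sn * a20"
  define B where "B = c * a11 + sn * a21"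
  have "- sn * a10 + c * a20 = 0" "2 * (- sn * a11 + c * a21) = 3 * (c * a10 + sn * a20)"
    using C1 C2 P1 P2 by simp_all
  then have e: "a10 = c * A" "a20 = sn * A" "a11 = c * B - 3 * sn * A / 2" "a21 = sn * B + 3 * c * A / 2"
    using cusp_low_coeffs[OF nrm] unfolding A_def B_def by blast+
  show ?thesis
  proof (rule that[of A B "r1 + [:3 * (B/2) * sn:]" "r2 - [:3 * (B/2) * c:]"])
    show "poly p1 t = (A/2 + B/2 * t) * (2 * c - 3 * sn * t) + t^2 * poly (r1 + [:3 * (B/2) * sn:]) t"
         "poly p2 t = (A/2 + B/2 * t) * (2 * sn + 3 * c * t) + t^2 * poly (r2 - [:3 * (B/2) * c:]) t" for t
      unfolding P1 P2 by (simp_all add: e field_simps power2_eq_square)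
  qed
qed

text \<open>Let \<open>Q\<close> be a homogeneous polynomial field of degree
  \<open>d \<ge> 1\<close> whose restriction to the line \<open>R_\<theta>(1, t)\<close> splits as in the previous lemma.  With
  \<open>t = x - s_b\<close> and \<open>\<lambda> = c X + s Y\<close> (so \<open>\<lambda> \<circ> c_\<theta> = t^2\<close>) this gives
  \<open>Q \<circ> c_\<theta> = t^{2d-1} (A + B t)/2 \<cdot> c_\<theta>' + (\<lambda>^{d+1} \<circ> c_\<theta>) w\<close>, and the first summand also
  equals \<open>(\<lambda>^d \<circ> c_\<theta>) v\<close> for a polynomial \<open>v\<close>.\<close>
lemma cusp_branch_kernel:
  fixes th :: "nat \<Rightarrow> real" and s :: "nat \<Rightarrow> 'a::real_normed_field" and Q :: "'a \<times> 'a \<Rightarrow> 'a \<times> 'a"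
  assumes hQ1: "homog_poly d (\<lambda>p. fst (Q p))" and hQ2: "homog_poly d (\<lambda>p. snd (Q p))" and d: "1 \<le> d"
    and pl1: "\<And>t. fst (Q (cosK th b - t * sinK th b, sinK th b + t * cosK th b)) = poly p1 t"
    and pl2: "\<And>t. snd (Q (cosK th b - t * sinK th b, sinK th b + t * cosK th b)) = poly p2 t"
    and C1: "- sinK th b * coeff p1 0 + cosK th b * coeff p2 0 = 0"
    and C2: "2 * (- sinK th b * coeff p1 1 + cosK th b * coeff p2 1)
               - 3 * (cosK th b * coeff p1 0 + sinK th b * coeff p2 0) = 0"
  shows "omega_ker {b} s (cusp_branch th s) d Q"
proof -
  define c where "c = (cosK th b :: 'a)"
  define sn where "sn = (sinK th b :: 'a)"
  obtain A B w1 w2 where split: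
      "\<And>t. poly p1 t = (A/2 + B/2 * t) * (2 * c - 3 * sn * t) + t^2 * poly w1 t"
      "\<And>t. poly p2 t = (A/2 + B/2 * t) * (2 * sn + 3 * c * t) + t^2 * poly w2 t"
    using cusp_line_split[OF cosK_sinK_sq C1 C2] unfolding c_def sn_def by blast
  have tm: "t ^ (2 * d - 1) * t = (t^2) ^ d" for t :: 'a
    using d by (metis Suc_pred' mult_pos_pos pos2 less_le_trans zero_less_one power_Suc2 power_mult)
  define qe where "qe = [:0, 1:] ^ (2 * d - 1) * [:A/2, B/2:]"
  define v1 where "v1 = [:A/2, B/2:] * [:2 * c, - 3 * sn:]"
  define v2 where "v2 = [:A/2, B/2:] * [:2 * sn, 3 * c:]"
  have pv: "poly v1 t = (A/2 + B/2 * t) * (2 * c - 3 * sn * t)"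
            "poly v2 t = (A/2 + B/2 * t) * (2 * sn + 3 * c * t)" for t
    by (simp_all add: v1_def v2_def algebra_simps)
  define u where "u n p = (c * fst p + sn * snd p) ^ n" for n p
  have u_branch: "u n (cusp_branch th s b x) = ((x - s b)^2)^n" for n x
    unfolding u_def c_def sn_def cusp_branch_tangent_form ..
  have u_m0: "m0 n (u n)" for n
    unfolding u_def by (rule homog_poly_m0[OF homog_poly_pow[OF homog_poly_lin]])
  define a where "a x = psmul (poly qe (x - s b))
      (deriv (\<lambda>t. fst (cusp_branch th s b t)) x, deriv (\<lambda>t. snd (cusp_branch th s b t)) x)" for x
  define w where "w x = psmul (u (Suc d) (cusp_branch th s b x)) (poly w1 (x - s b), poly w2 (x - s b))" for x
  have a_alt: "a x = psmul (u d (cusp_branch th s b x)) (poly v1 (x - s b), poly v2 (x - s b))" for x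
  proof -
    define t where "t = x - s b"
    have k: "poly qe t * t = (t^2)^d * (A/2 + B/2 * t)"
      by (simp add: qe_def poly_power tm[symmetric] algebra_simps)
    have "fst (a x) = (poly qe t * t) * (2 * c - 3 * sn * t)"
         "snd (a x) = (poly qe t * t) * (2 * sn + 3 * c * t)"
      unfolding a_def psmul_def cusp_branch_deriv c_def[symmetric] sn_def[symmetric] t_def
      by (simp_all add: mult_ac)
    then show ?thesis
      unfolding k psmul_def u_branch t_def[symmetric] pv by (simp add: prod_eq_iff)
  qed
  have decomp: "Q (cusp_branch th s b x) = a x + w x" for x
  proof -
    have "fst (Q (cusp_branch th s b x)) = ((x - s b)^2)^d * poly p1 (x - s b)"
         "snd (Q (cusp_branch th s b x)) = ((x - s b)^2)^d * poly p2 (x - s b)"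
      using homog_poly_on_cusp_branch[OF hQ1] homog_poly_on_cusp_branch[OF hQ2] pl1 pl2 by simp_all
    then show ?thesis
      unfolding a_alt w_def psmul_def u_branch split pv
      by (simp add: prod_eq_iff algebra_simps)
  qed
  have "in_TRe {b} s (cusp_branch th s) a"
    unfolding a_def by (rule in_TRe_poly_mult)
  moreover have "in_pbm {b} s (cusp_branch th s) d a"
    unfolding a_alt by (rule in_pbm_single[OF u_m0])
  moreover have "in_pbm {b} s (cusp_branch th s) (Suc d) w"
    unfolding w_def by (rule in_pbm_single[OF u_m0])
  ultimately show ?thesis
    unfolding omega_ker_def using decomp by (intro exI[of _ a] exI[of _ w]) simp
qed

lemma coeff_mult_1: "coeff (p * q) 1 = coeff p 0 * coeff q 1 + coeff p 1 * coeff q 0"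
  by (simp add: coeff_mult atMost_Suc add.commute)

lemma coeff_prod_lin0: "finite S \<Longrightarrow> coeff (\<Prod>n\<in>S. [:a n, e n:]) 0 = (\<Prod>n\<in>S. a n)"
  by (induction S rule: finite_induct) (simp_all add: coeff_mult_0)

lemma coeff_prod_lin1: "finite S \<Longrightarrow> coeff (\<Prod>n\<in>S. [:a n, e n:]) 1 = (\<Sum>n\<in>S. e n * (\<Prod>k\<in>S - {n}. a k))"
proof (induction S rule: finite_induct)
  case empty then show ?case by simp
next
  case (insert x F)
  have s: "(\<Sum>n\<in>insert x F. e n * (\<Prod>k\<in>insert x F - {n}. a k)) = e x * (\<Prod>k\<in>F. a k) + a x * (\<Sum>n\<in>F. e n * (\<Prod>k\<in>F - {n}. a k))"
  proof -
    have "(\<Sum>n\<in>insert x F. e n * (\<Prod>k\<in>insert x F - {n}. a k)) = e x * (\<Prod>k\<in>insert x F - {x}. a k) + (\<Sum>n\<in>F. e n * (\<Prod>k\<in>insert x F - {n}. a k))"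
      using insert by simp
    also have "(\<Prod>k\<in>insert x F - {x}. a k) = (\<Prod>k\<in>F. a k)" using insert by (simp add: insert_Diff_if)
    also have "(\<Sum>n\<in>F. e n * (\<Prod>k\<in>insert x F - {n}. a k)) = (\<Sum>n\<in>F. a x * (e n * (\<Prod>k\<in>F - {n}. a k)))"
    proof (rule sum.cong[OF refl])
      fix n assume n: "n \<in> F"
      have "insert x F - {n} = insert x (F - {n})" using n insert by auto
      then show "e n * (\<Prod>k\<in>insert x F - {n}. a k) = a x * (e n * (\<Prod>k\<in>F - {n}. a k))"
        using insert by (simp add: mult_ac)
    qed
    finally show ?thesis by (simp add: sum_distrib_left)
  qed
  show ?case using insert
    by (simp add: coeff_mult_1 coeff_prod_lin0 s algebra_simps)
qed

lemma sum_prod_remove: "finite M \<Longrightarrow> (\<Sum>m\<in>M. (\<Prod>k\<in>M - {m}. a k) * a m) = of_nat (card M) * (\<Prod>k\<in>M. a k)"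
proof -
  assume f: "finite M"
  have "(\<Sum>m\<in>M. (\<Prod>k\<in>M - {m}. a k) * a m) = (\<Sum>m\<in>M. (\<Prod>k\<in>M. a k))"
    using f by (intro sum.cong refl) (simp add: prod.remove mult.commute)
  then show ?thesis by simp
qed

lemma sum_prod_remove2:
  fixes a e :: "nat \<Rightarrow> 'a::comm_ring_1"
  shows "finite M \<Longrightarrow>
  (\<Sum>m\<in>M. a m * (\<Sum>n\<in>M - {m}. e n * (\<Prod>k\<in>M - {m} - {n}. a k)))
   = of_nat (card M - 1) * (\<Sum>n\<in>M. e n * (\<Prod>k\<in>M - {n}. a k))"
proof -
  assume f: "finite M"
  have "(\<Sum>m\<in>M. a m * (\<Sum>n\<in>M - {m}. e n * (\<Prod>k\<in>M - {m} - {n}. a k)))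
      = (\<Sum>m\<in>M. \<Sum>n\<in>M - {m}. e n * (\<Prod>k\<in>M - {n}. a k))"
  proof (rule sum.cong[OF refl])
    fix m assume m: "m \<in> M"
    have "a m * (\<Sum>n\<in>M - {m}. e n * (\<Prod>k\<in>M - {m} - {n}. a k)) = (\<Sum>n\<in>M - {m}. e n * (a m * (\<Prod>k\<in>M - {n} - {m}. a k)))"
      by (simp add: sum_distrib_left algebra_simps Diff_insert2[symmetric] insert_commute)
    also have "\<dots> = (\<Sum>n\<in>M - {m}. e n * (\<Prod>k\<in>M - {n}. a k))"
    proof (rule sum.cong[OF refl])
      fix n assume n: "n \<in> M - {m}"
      have "(\<Prod>k\<in>M - {n}. a k) = a m * (\<Prod>k\<in>M - {n} - {m}. a k)"
        using f n m by (intro prod.remove) auto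
      then show "e n * (a m * (\<Prod>k\<in>M - {n} - {m}. a k)) = e n * (\<Prod>k\<in>M - {n}. a k)" by simp
    qed
    finally show "a m * (\<Sum>n\<in>M - {m}. e n * (\<Prod>k\<in>M - {m} - {n}. a k)) = (\<Sum>n\<in>M - {m}. e n * (\<Prod>k\<in>M - {n}. a k))" .
  qed
  also have "\<dots> = (\<Sum>m\<in>M. (\<Sum>n\<in>M. e n * (\<Prod>k\<in>M - {n}. a k)) - e m * (\<Prod>k\<in>M - {m}. a k))"
    using f by (intro sum.cong refl) (simp add: sum_diff1)
  also have "\<dots> = of_nat (card M) * (\<Sum>n\<in>M. e n * (\<Prod>k\<in>M - {n}. a k)) - (\<Sum>n\<in>M. e n * (\<Prod>k\<in>M - {n}. a k))"
    by (simp add: sum_subtractf)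
  also have "\<dots> = of_nat (card M - 1) * (\<Sum>n\<in>M. e n * (\<Prod>k\<in>M - {n}. a k))"
  proof (cases "M = {}")
    case False
    then have "card M \<ge> 1" using f by (simp add: Suc_le_eq card_gt_0_iff)
    then have "of_nat (card M) = (of_nat (card M - 1) :: 'a) + 1" by (simp add: of_nat_diff)
    then show ?thesis by (simp add: algebra_simps)
  qed simp
  finally show ?thesis .
qed

section \<open>The explicit solution field \<open>\<xi>_V\<close>\<close>

text \<open>\<open>ell th n\<close> is the linear form \<open>det(u_n, p)\<close> with \<open>u_n = (cos \<theta>_n, sin \<theta>_n)\<close>; it
  vanishes on the tangent line of branch \<open>n\<close>.\<close>

definition ell :: "(nat \<Rightarrow> real) \<Rightarrow> nat \<Rightarrow> 'a::real_normed_field \<times> 'a \<Rightarrow> 'a" where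
  "ell th n p = - sinK th n * fst p + cosK th n * snd p"

definition xi_sol :: "(nat \<Rightarrow> real) \<Rightarrow> nat set \<Rightarrow> 'a::real_normed_field \<times> 'a \<Rightarrow> 'a \<times> 'a \<Rightarrow> 'a \<times> 'a" where
  "xi_sol th M V p =
    (of_nat (2 * card M + 1) * (\<Prod>n\<in>M. ell th n p) * fst V
       + 2 * (- snd p * fst V + fst p * snd V) * (\<Sum>m\<in>M. (\<Prod>n\<in>M - {m}. ell th n p) * cosK th m),
     of_nat (2 * card M + 1) * (\<Prod>n\<in>M. ell th n p) * snd V
       + 2 * (- snd p * fst V + fst p * snd V) * (\<Sum>m\<in>M. (\<Prod>n\<in>M - {m}. ell th n p) * sinK th m))"

lemma homog_poly_ell: "homog_poly 1 (ell th n)"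
proof -
  have e: "ell th n = (\<lambda>p. (- sinK th n) * fst p + cosK th n * snd p)" by (auto simp: ell_def)
  show ?thesis unfolding e by (rule homog_poly_lin)
qed

lemma homog_poly_det: "homog_poly 1 (\<lambda>p. - snd p * fst V + fst p * snd V)"
proof -
  have e: "(\<lambda>p. - snd p * fst V + fst p * snd V) = (\<lambda>p. snd V * fst p + (- fst V) * snd p)" by (auto simp: algebra_simps)
  show ?thesis unfolding e by (rule homog_poly_lin)
qed

lemma homog_poly_xi_sol:
  assumes f: "finite M" and c: "card M \<ge> 1"
  shows "homog_poly (card M) (\<lambda>p. fst (xi_sol th M V p))" "homog_poly (card M) (\<lambda>p. snd (xi_sol th M V p))"
proof -
  have P: "homog_poly (card M) (\<lambda>p. \<Prod>n\<in>M. ell th n p)" using homog_poly_prod[OF f, of "\<lambda>n. ell th n"] homog_poly_ell by blast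
  have Pt: "homog_poly (card M - 1) (\<lambda>p. (\<Prod>n\<in>M - {m}. ell th n p) * g)" if "m \<in> M" for m g
  proof -
    have "homog_poly (card (M - {m})) (\<lambda>p. \<Prod>n\<in>M - {m}. ell th n p)"
      using homog_poly_prod[of "M - {m}" "\<lambda>n. ell th n"] f homog_poly_ell by blast
    then have "homog_poly (card (M - {m}) + 0) (\<lambda>p. (\<Prod>n\<in>M - {m}. ell th n p) * g)"
      using homog_poly_mult[OF _ homog_poly_const] by blast
    then show ?thesis using that f by simp
  qed
  have S: "homog_poly (card M - 1) (\<lambda>p. \<Sum>m\<in>M. (\<Prod>n\<in>M - {m}. ell th n p) * g m)" for g
    using homog_poly_sum[OF f, of "card M - 1" "\<lambda>m p. (\<Prod>n\<in>M - {m}. ell th n p) * g m"] Pt by blast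
  have T2: "homog_poly (card M) (\<lambda>p. 2 * (- snd p * fst V + fst p * snd V) * (\<Sum>m\<in>M. (\<Prod>n\<in>M - {m}. ell th n p) * g m))" for g
  proof -
    have "homog_poly (1 + (card M - 1)) (\<lambda>p. 2 * (- snd p * fst V + fst p * snd V) * (\<Sum>m\<in>M. (\<Prod>n\<in>M - {m}. ell th n p) * g m))"
      using homog_poly_mult[OF homog_poly_scale[OF homog_poly_det, of 2] S[of g]] by simp
    then show ?thesis using c by simp
  qed
  have T1: "homog_poly (card M) (\<lambda>p. of_nat (2 * card M + 1) * (\<Prod>n\<in>M. ell th n p) * g)" for g
  proof -
    have "homog_poly (card M + 0) (\<lambda>p. of_nat (2 * card M + 1) * (\<Prod>n\<in>M. ell th n p) * g)"
      using homog_poly_mult[OF homog_poly_scale[OF P, of "of_nat (2 * card M + 1)"] homog_poly_const[of g]] by simp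
    then show ?thesis by simp
  qed
  show "homog_poly (card M) (\<lambda>p. fst (xi_sol th M V p))"
    unfolding xi_sol_def fst_conv using homog_poly_add[OF T1 T2] by simp
  show "homog_poly (card M) (\<lambda>p. snd (xi_sol th M V p))"
    unfolding xi_sol_def snd_conv using homog_poly_add[OF T1 T2] by simp
qed

lemma ell_on_line:
  "ell th n (cosK th b - t * sinK th b, sinK th b + t * cosK th b)
     = ell th n (cosK th b, sinK th b) + t * ell th n (- sinK th b, cosK th b)"
  by (simp add: ell_def algebra_simps)

lemma direction_sums:
  "- sinK th b * (\<Sum>m\<in>M. cosK th m * X m) + cosK th b * (\<Sum>m\<in>M. sinK th m * X m)
     = - (\<Sum>m\<in>M. ell th m (cosK th b, sinK th b) * X m)"
  "cosK th b * (\<Sum>m\<in>M. cosK th m * X m) + sinK th b * (\<Sum>m\<in>M. sinK th m * X m)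
     = (\<Sum>m\<in>M. ell th m (- sinK th b, cosK th b) * X m)"
  by (simp_all add: ell_def sum_distrib_left sum_negf sum.distrib[symmetric] algebra_simps)

lemma xi_sol_line_coeffs:
  fixes th :: "nat \<Rightarrow> real" and V :: "'a::real_normed_field \<times> 'a" and b :: nat and M :: "nat set"
  assumes f: "finite M"
  defines "A n \<equiv> ell th n (cosK th b, sinK th b)" and "E n \<equiv> ell th n (- sinK th b, cosK th b)"
  defines "T0 m \<equiv> \<Prod>k\<in>M - {m}. A k" and "T1 m \<equiv> \<Sum>n\<in>M - {m}. E n * (\<Prod>k\<in>M - {m} - {n}. A k)"
  defines "Bv \<equiv> - sinK th b * fst V + cosK th b * snd V" and "Av \<equiv> cosK th b * fst V + sinK th b * snd V"
  defines "K \<equiv> (of_nat (2 * card M + 1) :: 'a)"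
  obtains p1 p2 where
    "\<And>t. fst (xi_sol th M V (cosK th b - t * sinK th b, sinK th b + t * cosK th b)) = poly p1 t"
    "\<And>t. snd (xi_sol th M V (cosK th b - t * sinK th b, sinK th b + t * cosK th b)) = poly p2 t"
    "coeff p1 0 = K * fst V * (\<Prod>n\<in>M. A n) + 2 * Bv * (\<Sum>m\<in>M. cosK th m * T0 m)"
    "coeff p2 0 = K * snd V * (\<Prod>n\<in>M. A n) + 2 * Bv * (\<Sum>m\<in>M. sinK th m * T0 m)"
    "coeff p1 1 = K * fst V * (\<Sum>n\<in>M. E n * T0 n)
                  + 2 * (Bv * (\<Sum>m\<in>M. cosK th m * T1 m) - Av * (\<Sum>m\<in>M. cosK th m * T0 m))"
    "coeff p2 1 = K * snd V * (\<Sum>n\<in>M. E n * T0 n)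
                  + 2 * (Bv * (\<Sum>m\<in>M. sinK th m * T1 m) - Av * (\<Sum>m\<in>M. sinK th m * T0 m))"
proof -
  define PP where "PP = (\<Prod>n\<in>M. [:A n, E n:])"
  define PT where "PT m = (\<Prod>n\<in>M - {m}. [:A n, E n:])" for m
  define pj where "pj = [:Bv, - Av:]"
  define p1 where "p1 = smult (K * fst V) PP + smult 2 (pj * (\<Sum>m\<in>M. smult (cosK th m) (PT m)))"
  define p2 where "p2 = smult (K * snd V) PP + smult 2 (pj * (\<Sum>m\<in>M. smult (sinK th m) (PT m)))"
  have PPt: "poly PP t = (\<Prod>n\<in>M. ell th n (cosK th b - t * sinK th b, sinK th b + t * cosK th b))" for t
    by (simp add: PP_def poly_prod ell_on_line A_def E_def)
  have PTt: "poly (PT m) t = (\<Prod>n\<in>M - {m}. ell th n (cosK th b - t * sinK th b, sinK th b + t * cosK th b))" for m t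
    by (simp add: PT_def poly_prod ell_on_line A_def E_def)
  have Jt: "poly pj t = - (sinK th b + t * cosK th b) * fst V + (cosK th b - t * sinK th b) * snd V" for t
    by (simp add: pj_def Bv_def Av_def algebra_simps)
  have cPP: "coeff PP 0 = (\<Prod>n\<in>M. A n)" "coeff PP (Suc 0) = (\<Sum>n\<in>M. E n * T0 n)"
    unfolding PP_def T0_def using coeff_prod_lin0[OF f] coeff_prod_lin1[OF f] by simp_all
  have cPT: "coeff (PT m) 0 = T0 m" "coeff (PT m) (Suc 0) = T1 m" for m
    unfolding PT_def T0_def T1_def using coeff_prod_lin0[of "M - {m}"] coeff_prod_lin1[of "M - {m}"] f
    by simp_all
  show ?thesis
  proof (rule that[of p1 p2])
    show "fst (xi_sol th M V (cosK th b - t * sinK th b, sinK th b + t * cosK th b)) = poly p1 t"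
         "snd (xi_sol th M V (cosK th b - t * sinK th b, sinK th b + t * cosK th b)) = poly p2 t" for t
      by (simp_all add: xi_sol_def p1_def p2_def poly_sum PPt PTt Jt K_def mult_ac)
  qed (simp_all add: p1_def p2_def coeff_mult_0 coeff_mult_1 coeff_sum cPP cPT pj_def sum_distrib_left
      sum_subtractf[symmetric] algebra_simps)
qed

lemma xi_sol_conditions:
  fixes th :: "nat \<Rightarrow> real" and V :: "'a::real_normed_field \<times> 'a"
  assumes f: "finite M" and c1: "card M \<ge> 1"
  obtains p1 p2 where
    "\<And>t. fst (xi_sol th M V (cosK th b - t * sinK th b, sinK th b + t * cosK th b)) = poly p1 t"
    "\<And>t. snd (xi_sol th M V (cosK th b - t * sinK th b, sinK th b + t * cosK th b)) = poly p2 t"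
    "- sinK th b * coeff p1 0 + cosK th b * coeff p2 0
       = (\<Prod>n\<in>M. ell th n (cosK th b, sinK th b)) * (- sinK th b * fst V + cosK th b * snd V)"
    "2 * (- sinK th b * coeff p1 1 + cosK th b * coeff p2 1)
        - 3 * (cosK th b * coeff p1 0 + sinK th b * coeff p2 0)
       = - (2 * of_nat (card M) + 3) * (\<Prod>n\<in>M. ell th n (cosK th b, sinK th b))
           * (cosK th b * fst V + sinK th b * snd V)"
proof -
  define c where "c = (cosK th b :: 'a)"
  define sn where "sn = (sinK th b :: 'a)"
  define A where "A n = ell th n (c, sn)" for n
  define E where "E n = ell th n (- sn, c)" for n
  define T0 where "T0 m = (\<Prod>k\<in>M - {m}. A k)" for m
  define T1 where "T1 m = (\<Sum>n\<in>M - {m}. E n * (\<Prod>k\<in>M - {m} - {n}. A k))" for m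
  define Bv where "Bv = - sn * fst V + c * snd V"
  define Av where "Av = c * fst V + sn * snd V"
  obtain p1 p2 where L: "\<And>t. fst (xi_sol th M V (c - t * sn, sn + t * c)) = poly p1 t"
      "\<And>t. snd (xi_sol th M V (c - t * sn, sn + t * c)) = poly p2 t"
    and c0: "coeff p1 0 = of_nat (2 * card M + 1) * fst V * (\<Prod>n\<in>M. A n) + 2 * Bv * (\<Sum>m\<in>M. cosK th m * T0 m)"
      "coeff p2 0 = of_nat (2 * card M + 1) * snd V * (\<Prod>n\<in>M. A n) + 2 * Bv * (\<Sum>m\<in>M. sinK th m * T0 m)"
    and c1': "coeff p1 1 = of_nat (2 * card M + 1) * fst V * (\<Sum>n\<in>M. E n * T0 n)
          + 2 * (Bv * (\<Sum>m\<in>M. cosK th m * T1 m) - Av * (\<Sum>m\<in>M. cosK th m * T0 m))"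
      "coeff p2 1 = of_nat (2 * card M + 1) * snd V * (\<Sum>n\<in>M. E n * T0 n)
          + 2 * (Bv * (\<Sum>m\<in>M. sinK th m * T1 m) - Av * (\<Sum>m\<in>M. sinK th m * T0 m))"
    using xi_sol_line_coeffs[OF f, where th=th and b=b and V=V] unfolding c_def sn_def A_def E_def T0_def T1_def Bv_def Av_def
    by blast
  have F1: "- sn * (\<Sum>m\<in>M. cosK th m * T0 m) + c * (\<Sum>m\<in>M. sinK th m * T0 m) = - (of_nat (card M) * (\<Prod>n\<in>M. A n))"
    using direction_sums(1)[where th=th and b=b and M=M and X=T0] sum_prod_remove[OF f, of A]
    unfolding c_def sn_def A_def T0_def by (simp add: mult.commute)
  have F2: "- sn * (\<Sum>m\<in>M. cosK th m * T1 m) + c * (\<Sum>m\<in>M. sinK th m * T1 m)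
      = - (of_nat (card M - 1) * (\<Sum>n\<in>M. E n * T0 n))"
    using direction_sums(1)[where th=th and b=b and M=M and X=T1] sum_prod_remove2[OF f, of A E]
    unfolding c_def sn_def A_def E_def T0_def T1_def by simp
  have F3: "c * (\<Sum>m\<in>M. cosK th m * T0 m) + sn * (\<Sum>m\<in>M. sinK th m * T0 m) = (\<Sum>n\<in>M. E n * T0 n)"
    using direction_sums(2)[where th=th and b=b and M=M and X=T0] unfolding c_def sn_def E_def by simp
  have dm1: "(of_nat (card M - 1) :: 'a) = of_nat (card M) - 1" using c1 by (simp add: of_nat_diff)
  have G1: "- sn * coeff p1 0 + c * coeff p2 0 = (\<Prod>n\<in>M. A n) * Bv"
  proof -
    have "- sn * coeff p1 0 + c * coeff p2 0
        = of_nat (2 * card M + 1) * (\<Prod>n\<in>M. A n) * Bv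
          + 2 * Bv * (- sn * (\<Sum>m\<in>M. cosK th m * T0 m) + c * (\<Sum>m\<in>M. sinK th m * T0 m))"
      unfolding c0 Bv_def by (simp add: algebra_simps)
    then show ?thesis unfolding F1 by (simp add: algebra_simps)
  qed
  have G2: "2 * (- sn * coeff p1 1 + c * coeff p2 1) - 3 * (c * coeff p1 0 + sn * coeff p2 0)
      = - (2 * of_nat (card M) + 3) * (\<Prod>n\<in>M. A n) * Av"
  proof -
    have "2 * (- sn * coeff p1 1 + c * coeff p2 1) - 3 * (c * coeff p1 0 + sn * coeff p2 0)
       = 2 * (of_nat (2 * card M + 1) * (\<Sum>n\<in>M. E n * T0 n) * Bv
              + 2 * Bv * (- sn * (\<Sum>m\<in>M. cosK th m * T1 m) + c * (\<Sum>m\<in>M. sinK th m * T1 m))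
              - 2 * Av * (- sn * (\<Sum>m\<in>M. cosK th m * T0 m) + c * (\<Sum>m\<in>M. sinK th m * T0 m)))
         - 3 * (of_nat (2 * card M + 1) * (\<Prod>n\<in>M. A n) * Av
              + 2 * Bv * (c * (\<Sum>m\<in>M. cosK th m * T0 m) + sn * (\<Sum>m\<in>M. sinK th m * T0 m)))"
      unfolding c0 c1' Bv_def Av_def by (simp add: algebra_simps)
    then show ?thesis unfolding F1 F2 F3 dm1 by (simp add: algebra_simps)
  qed
  show ?thesis
    by (rule that[of p1 p2]) (use L G1 G2 in \<open>simp_all add: c_def sn_def A_def Bv_def Av_def\<close>)
qed

text \<open>Angles in \<open>[0, 2\<pi>)\<close> that are neither equal nor opposite have nonzero sine of the
  difference; so the tangent direction of one branch is not on the tangent line of another.\<close>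
lemma sin_diff_nonzero:
  assumes "0 \<le> a" "a < 2*pi" "0 \<le> b" "b < 2*pi" "a \<noteq> b" "\<bar>a - b\<bar> \<noteq> pi"
  shows "sin (a - b) \<noteq> 0"
proof
  assume "sin (a - b) = 0"
  then obtain i :: int where i: "a - b = of_int i * pi" using sin_zero_iff_int2 by blast
  have "\<bar>of_int i * pi\<bar> < 2 * pi" using assms i by linarith
  then have "\<bar>of_int i\<bar> * pi < 2 * pi" by (simp add: abs_mult)
  then have "\<bar>real_of_int i\<bar> < 2" using pi_gt_zero by (simp add: mult_less_cancel_right)
  then have "\<bar>i\<bar> < 2" by linarith
  then have "i = 0 \<or> i = 1 \<or> i = -1" by auto
  then show False using assms i by auto
qed

lemma ell_sin: "ell th n (cosK th j, sinK th j) = (of_real (sin (th j - th n)) :: 'a::real_normed_field)"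
  by (simp add: ell_def cosK_def sinK_def sin_diff algebra_simps)

lemma ell_self: "ell th b (cosK th b, sinK th b) = 0"
  by (simp add: ell_def algebra_simps)

lemma ell_other_branch_nonzero:
  assumes "0 \<le> th j" "th j < 2*pi" "0 \<le> th n" "th n < 2*pi" "th j \<noteq> th n" "\<bar>th j - th n\<bar> \<noteq> pi"
  shows "ell th n (cosK th j, sinK th j) \<noteq> (0::'a::real_normed_field)"
  using sin_diff_nonzero[OF assms] by (simp add: ell_sin)

text \<open>On every branch of \<open>M\<close> the criterion quantities of \<open>\<xi>_V\<close> vanish, since the product
  \<open>\<Prod>_{n\<in>M} \<ell>_n(u_b)\<close> contains the factor \<open>\<ell>_b(u_b) = 0\<close>; by locality \<open>\<xi>_V\<close> is in the kernel of
  the whole multigerm indexed by \<open>M\<close>.\<close>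
lemma xi_sol_kernel:
  assumes f: "finite M" and c1: "card M \<ge> 1" and inj: "inj_on s M"
  shows "omega_ker M s (cusp_branch th s) (card M) (xi_sol th M V)"
proof (rule omega_ker_all[OF f inj], rule ballI)
  fix b assume b: "b \<in> M"
  obtain p1 p2 where pp: "\<And>t. fst (xi_sol th M V (cosK th b - t * sinK th b, sinK th b + t * cosK th b)) = poly p1 t"
      "\<And>t. snd (xi_sol th M V (cosK th b - t * sinK th b, sinK th b + t * cosK th b)) = poly p2 t"
      "- sinK th b * coeff p1 0 + cosK th b * coeff p2 0
         = (\<Prod>n\<in>M. ell th n (cosK th b, sinK th b)) * (- sinK th b * fst V + cosK th b * snd V)"
      "2 * (- sinK th b * coeff p1 1 + cosK th b * coeff p2 1) - 3 * (cosK th b * coeff p1 0 + sinK th b * coeff p2 0)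
         = - (2 * of_nat (card M) + 3) * (\<Prod>n\<in>M. ell th n (cosK th b, sinK th b)) * (cosK th b * fst V + sinK th b * snd V)"
    using xi_sol_conditions[OF f c1, where th=th and b=b and V=V] by blast
  have "(\<Prod>n\<in>M. ell th n (cosK th b, sinK th b)) = (0::'a)"
    using prod.remove[OF f b, of "\<lambda>n. ell th n (cosK th b, sinK th b)"] by (simp add: ell_self)
  then show "omega_ker {b} s (cusp_branch th s) (card M) (xi_sol th M V)"
    using homog_poly_xi_sol[OF f c1, of th V] c1 pp by (intro cusp_branch_kernel[of "card M" _ th b p1 p2]) auto
qed

text \<open>At a branch \<open>j\<close> off all tangent lines of \<open>M\<close>, the criterion quantities of \<open>\<xi>_V\<close> are an
  invertible linear function of \<open>V\<close>.\<close>
lemma xi_sol_fit: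
  fixes P :: "'a::real_normed_field \<times> 'a \<Rightarrow> 'a \<times> 'a"
  assumes f: "finite M" and c1: "card M \<ge> 1"
    and psi: "(\<Prod>n\<in>M. ell th n (cosK th j, sinK th j)) \<noteq> (0::'a)"
    and hP: "homog_poly (card M) (\<lambda>p. fst (P p))" "homog_poly (card M) (\<lambda>p. snd (P p))"
  obtains V where "omega_ker {j} s (cusp_branch th s) (card M) (\<lambda>p. xi_sol th M V p - P p)"
proof -
  define c where "c = (cosK th j :: 'a)"
  define sn where "sn = (sinK th j :: 'a)"
  define psi where "psi = (\<Prod>n\<in>M. ell th n (c, sn))"
  obtain q1 where q1: "\<And>t. fst (P (c + t * (- sn), sn + t * c)) = poly q1 t" using homog_poly_line[OF hP(1)] by blast
  obtain q2 where q2: "\<And>t. snd (P (c + t * (- sn), sn + t * c)) = poly q2 t" using homog_poly_line[OF hP(2)] by blast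
  define K3 where "K3 = (2 * of_nat (card M) + 3 :: 'a)"
  have K3: "K3 \<noteq> 0"
    using of_nat_neq_0[of "2 * card M + 2", where 'a='a] by (simp add: K3_def add_ac)
  define Bt where "Bt = (- sn * coeff q1 0 + c * coeff q2 0) / psi"
  define At where "At = - (2 * (- sn * coeff q1 1 + c * coeff q2 1) - 3 * (c * coeff q1 0 + sn * coeff q2 0)) / (K3 * psi)"
  define V where "V = (At * c - Bt * sn, At * sn + Bt * c)"
  have nrm: "c^2 + sn^2 = 1" unfolding c_def sn_def by (rule cosK_sinK_sq)
  have Vb: "- sn * fst V + c * snd V = Bt" and Va: "c * fst V + sn * snd V = At"
    using nrm by (simp_all add: V_def algebra_simps power2_eq_square flip: distrib_left)
  obtain p1 p2 where pp: "\<And>t. fst (xi_sol th M V (c - t * sn, sn + t * c)) = poly p1 t"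
      "\<And>t. snd (xi_sol th M V (c - t * sn, sn + t * c)) = poly p2 t"
      "- sn * coeff p1 0 + c * coeff p2 0 = psi * (- sn * fst V + c * snd V)"
      "2 * (- sn * coeff p1 1 + c * coeff p2 1) - 3 * (c * coeff p1 0 + sn * coeff p2 0)
         = - K3 * psi * (c * fst V + sn * snd V)"
    using xi_sol_conditions[OF f c1, where th=th and b=j and V=V]
    unfolding c_def sn_def psi_def K3_def by blast
  have psi': "psi \<noteq> 0" using psi unfolding psi_def c_def sn_def .
  have "omega_ker {j} s (cusp_branch th s) (card M) (\<lambda>p. xi_sol th M V p - P p)"
  proof (rule cusp_branch_kernel[where ?p1.0="p1 - q1" and ?p2.0="p2 - q2"])
    show "homog_poly (card M) (\<lambda>p. fst (xi_sol th M V p - P p))"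
         "homog_poly (card M) (\<lambda>p. snd (xi_sol th M V p - P p))"
      using homog_poly_diff[OF homog_poly_xi_sol(1)[OF f c1] hP(1)]
            homog_poly_diff[OF homog_poly_xi_sol(2)[OF f c1] hP(2)] by simp_all
    show "1 \<le> card M" by (rule c1)
    show "fst (xi_sol th M V (cosK th j - t * sinK th j, sinK th j + t * cosK th j)
             - P (cosK th j - t * sinK th j, sinK th j + t * cosK th j)) = poly (p1 - q1) t"
         "snd (xi_sol th M V (cosK th j - t * sinK th j, sinK th j + t * cosK th j)
             - P (cosK th j - t * sinK th j, sinK th j + t * cosK th j)) = poly (p2 - q2) t" for t
      using pp(1,2) q1 q2 unfolding c_def sn_def by simp_all
    have "- sn * coeff p1 0 + c * coeff p2 0 = - sn * coeff q1 0 + c * coeff q2 0"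
      using pp(3) psi' unfolding Vb Bt_def by simp
    then show "- sinK th j * coeff (p1 - q1) 0 + cosK th j * coeff (p2 - q2) 0 = 0"
      unfolding c_def sn_def by (simp add: algebra_simps)
    have "2 * (- sn * coeff p1 1 + c * coeff p2 1) - 3 * (c * coeff p1 0 + sn * coeff p2 0)
        = 2 * (- sn * coeff q1 1 + c * coeff q2 1) - 3 * (c * coeff q1 0 + sn * coeff q2 0)"
    proof -
      have "- K3 * psi * At
          = 2 * (- sn * coeff q1 1 + c * coeff q2 1) - 3 * (c * coeff q1 0 + sn * coeff q2 0)"
        using psi' K3 unfolding At_def by simp
      then show ?thesis using pp(4) unfolding Va by simp
    qed
    then show "2 * (- sinK th j * coeff (p1 - q1) 1 + cosK th j * coeff (p2 - q2) 1)
            - 3 * (cosK th j * coeff (p1 - q1) 0 + sinK th j * coeff (p2 - q2) 0) = 0"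
      unfolding c_def sn_def by (simp add: algebra_simps)
  qed
  then show ?thesis by (rule that)
qed

lemma vf_m0_diff: "vf_m0 d \<xi> \<Longrightarrow> vf_m0 d \<zeta> \<Longrightarrow> vf_m0 d (\<lambda>p. \<xi> p - \<zeta> p)"
  unfolding vf_m0_def by (simp add: m0_diff)

lemma vf_homogeneous_part:
  assumes "vf_m0 d \<xi>"
  obtains P where "homog_poly d (\<lambda>p. fst (P p))" "homog_poly d (\<lambda>p. snd (P p))"
    "vf_m0 (Suc d) (\<lambda>p. \<xi> p - P p)"
proof -
  obtain L1 where L1: "homog d L1" "m0 (Suc d) (\<lambda>p. fst (\<xi> p) - mpoly L1 p)"
    using m0_homogeneous_part assms unfolding vf_m0_def by blast
  obtain L2 where L2: "homog d L2" "m0 (Suc d) (\<lambda>p. snd (\<xi> p) - mpoly L2 p)"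
    using m0_homogeneous_part assms unfolding vf_m0_def by blast
  show ?thesis
    by (rule that[of "\<lambda>p. (mpoly L1 p, mpoly L2 p)"]) (use L1 L2 in \<open>auto simp: homog_poly_def vf_m0_def\<close>)
qed

lemma omega_ker_difference:
  assumes "finite J" "inj_on s J"
    and "omega_ker (J - {j}) s F i \<xi>" "omega_ker (J - {j}) s F i \<zeta>"
    and "vf_m0 (Suc i) (\<lambda>p. \<xi> p - P p)" "omega_ker {j} s F i (\<lambda>p. \<zeta> p - P p)"
  shows "omega_ker J s F i (\<lambda>p. \<xi> p - \<zeta> p)"
proof (rule omega_ker_all[OF assms(1,2)], rule ballI)
  fix l assume l: "l \<in> J"
  show "omega_ker {l} s F i (\<lambda>p. \<xi> p - \<zeta> p)"
  proof (cases "l = j")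
    case True
    have "omega_ker {j} s F i (\<lambda>p. (\<xi> p - P p) - (\<zeta> p - P p))"
      using omega_ker_diff[OF omega_ker_m0[OF assms(5)] assms(6)] .
    then show ?thesis unfolding True by simp
  next
    case False
    then have "{l} \<subseteq> J - {j}" using l by auto
    then show ?thesis
      using omega_ker_diff[OF omega_ker_restrict[OF assms(3)] omega_ker_restrict[OF assms(4)]] by blast
  qed
qed

text \<open>With \<open>M = {0..k+1} - {j}\<close>: split off the homogeneous part \<open>P\<close> of \<open>\<xi>\<close>, take
  \<open>\<xi>\<^sub>1 = \<xi>_V\<close> with \<open>\<xi>_V - P\<close> in the kernel at branch \<open>j\<close>, and \<open>\<xi>\<^sub>2 = \<xi> - \<xi>\<^sub>1\<close>.  Then \<open>\<xi>\<^sub>2\<close> is in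
  the kernel at each branch \<open>l \<le> k\<close>: for \<open>l \<noteq> j\<close> as a difference of kernel elements, and for
  \<open>l = j\<close> as \<open>(\<xi> - P) - (\<xi>\<^sub>1 - P)\<close> with \<open>\<xi> - P \<in> m_0^{k+2}\<theta>_0(2)\<close>.\<close>
theorem lemma2:
  fixes k j :: nat and th :: "nat \<Rightarrow> real" and s :: "nat \<Rightarrow> 'a::real_normed_field"
    and \<xi> :: "'a \<times> 'a \<Rightarrow> 'a \<times> 'a"
  assumes "k \<ge> 1"
    and "\<forall>l\<le>k+1. 0 \<le> th l \<and> th l < 2 * pi"
    and "\<forall>l\<le>k+1. \<forall>m\<le>k+1. l \<noteq> m \<longrightarrow> th l \<noteq> th m \<and> \<bar>th l - th m\<bar> \<noteq> pi"
    and "inj_on s {0..k+1}"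
    and "j \<le> k"
    and "vf_m0 (k+1) \<xi>"
    and "omega_ker ({0..k} - {j}) s (cusp_branch th s) (k+1) \<xi>"
  shows "\<exists>\<xi>1 \<xi>2. vf_m0 (k+1) \<xi>1 \<and> vf_m0 (k+1) \<xi>2
           \<and> omega_ker ({0..k+1} - {j}) s (cusp_branch th s) (k+1) \<xi>1
           \<and> omega_ker {0..k} s (cusp_branch th s) (k+1) \<xi>2
           \<and> vf_m0 (k+2) (\<lambda>p. \<xi> p - \<xi>1 p - \<xi>2 p)"
proof -
  define M where "M = {0..k+1} - {j}"
  have fM: "finite M" and cM: "card M = k + 1" and c1: "card M \<ge> 1"
    using assms(5) by (simp_all add: M_def)
  obtain P where hP: "homog_poly (k+1) (\<lambda>p. fst (P p))" "homog_poly (k+1) (\<lambda>p. snd (P p))"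
    and P: "vf_m0 (Suc (k+1)) (\<lambda>p. \<xi> p - P p)"
    using vf_homogeneous_part[OF assms(6)] by blast
  have "ell th n (cosK th j, sinK th j) \<noteq> (0::'a)" if n: "n \<in> M" for n
    using assms(2,3,5) n by (intro ell_other_branch_nonzero) (auto simp: M_def)
  then have psi: "(\<Prod>n\<in>M. ell th n (cosK th j, sinK th j)) \<noteq> (0::'a)"
    by (simp add: fM)
  have hP': "homog_poly (card M) (\<lambda>p. fst (P p))" "homog_poly (card M) (\<lambda>p. snd (P p))"
    using hP unfolding cM .
  obtain V where "omega_ker {j} s (cusp_branch th s) (card M) (\<lambda>p. xi_sol th M V p - P p)"
    using xi_sol_fit[OF fM c1 psi hP'] .
  then have Vj: "omega_ker {j} s (cusp_branch th s) (k+1) (\<lambda>p. xi_sol th M V p - P p)"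
    unfolding cM .
  define \<xi>1 where "\<xi>1 = xi_sol th M V"
  have vf1: "vf_m0 (k+1) \<xi>1"
    using homog_poly_m0 homog_poly_xi_sol[OF fM c1, of th V] unfolding cM \<xi>1_def vf_m0_def by blast
  have "inj_on s M" using inj_on_subset[OF assms(4)] unfolding M_def by blast
  then have K1: "omega_ker M s (cusp_branch th s) (k+1) \<xi>1"
    using xi_sol_kernel[OF fM c1] unfolding \<xi>1_def cM by blast
  have K1': "omega_ker ({0..k} - {j}) s (cusp_branch th s) (k+1) (xi_sol th M V)"
    by (rule omega_ker_restrict[OF K1[unfolded \<xi>1_def]]) (auto simp: M_def)
  have "inj_on s {0..k}" by (rule inj_on_subset[OF assms(4)]) auto
  from omega_ker_difference[OF _ this assms(7) K1' P Vj]
  have K2: "omega_ker {0..k} s (cusp_branch th s) (k+1) (\<lambda>p. \<xi> p - \<xi>1 p)"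
    unfolding \<xi>1_def by simp
  have "vf_m0 (k+2) (\<lambda>p. \<xi> p - \<xi>1 p - (\<xi> p - \<xi>1 p))"
    using homog_poly_m0[OF homog_poly_zero] by (simp add: vf_m0_def)
  with vf1 vf_m0_diff[OF assms(6) vf1] K1 K2 show ?thesis
    unfolding M_def by (intro exI[of _ \<xi>1] exI[of _ "\<lambda>p. \<xi> p - \<xi>1 p"] conjI)
qed

end
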